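(* $MCF(G,\sigma)\subseteq MA(G,\sigma)$, and $$MCF(G,\sigma)=\{\varphi\in MA(G,\sigma)\mid M_\varphi(C^*_r(G,\sigma))\subseteq CF(G,\sigma)\}.$$ Moreover, if $\varphi\in MCF(G,\sigma)$, then for every $x\in C^*_r(G,\sigma)$ the series $\sum_{g\in G}\varphi(g)\widehat x(g)\Lambda_\sigma(g)$ converges to $M_\varphi(x)$ in operator norm.
   Context: $G$ is a discrete group, $\sigma:G\times G\to\mathbb{T}$ a normalized 2-cocycle ($\sigma(g,h)\sigma(gh,k)=\sigma(h,k)\sigma(g,hk)$, $\sigma(g,e)=\sigma(e,g)=1$); $\Lambda_\sigma(g)$ is the unitary on $\ell^2(G)$ with $(\Lambda_\sigma(g)\xi)(h)=\sigma(g,g^{-1}h)\xi(g^{-1}h)$; $C^*_r(G,\sigma)$ is the operator-norm closure of $\mathbb{C}(G,\sigma)=\mathrm{span}\,\Lambda_\sigma(G)$. For $x\in C^*_r(G,\sigma)$, $\widehat x=x\delta_e\in\ell^2(G)$, and its Fourier series is $\sum_g\widehat x(g)\Lambda_\sigma(g)$ (series over $G$ converge as nets of finite partial sums); $CF(G,\sigma)$ is the set of $x\in C^*_r(G,\sigma)$ whose Fourier series converges in operator norm. For $\varphi:G\to\mathbb{C}$, $M_\varphi$ is the linear map on $\mathbb{C}(G,\sigma)$ with $M_\varphi(\Lambda_\sigma(g))=\varphi(g)\Lambda_\sigma(g)$; $MA(G,\sigma)$ is the set of $\varphi$ such that $M_\varphi$ is bounded in operator norm, and then $M_\varphi$ denotes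 its bounded extension to $C^*_r(G,\sigma)$. $MCF(G,\sigma)$ is the set of $\varphi:G\to\mathbb{C}$ such that $\sum_g\varphi(g)\widehat x(g)\Lambda_\sigma(g)$ converges in operator norm for every $x\in C^*_r(G,\sigma)$. *)

theory Defs
  imports "HOL-Analysis.Analysis"
begin

class mgroup = monoid_mult + inverse +
  assumes mgroup_left_inverse: "inverse a * a = 1"

definition cocycle2 :: "('g::mgroup \<Rightarrow> 'g \<Rightarrow> complex) \<Rightarrow> bool" where
  "cocycle2 \<sigma> \<longleftrightarrow> (\<forall>g h. cmod (\<sigma> g h) = 1)
     \<and> (\<forall>g h k. \<sigma> g h * \<sigma> (g * h) k = \<sigma> h k * \<sigma> g (h * k))
     \<and> (\<forall>g. \<sigma> g 1 = 1 \<and> \<sigma> 1 g = 1)"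

definition l2 :: "('g \<Rightarrow> complex) set" where
  "l2 = {\<xi>. (\<lambda>h. (cmod (\<xi> h))\<^sup>2) summable_on UNIV}"

definition l2norm :: "('g \<Rightarrow> complex) \<Rightarrow> real" where
  "l2norm \<xi> = sqrt (\<Sum>\<^sub>\<infinity>h. (cmod (\<xi> h))\<^sup>2)"

text \<open>Operators are maps on functions G -> C; only their behaviour on l2 matters.\<close>
type_synonym 'g op = "('g \<Rightarrow> complex) \<Rightarrow> ('g \<Rightarrow> complex)"

definition bounded_op :: "'g op \<Rightarrow> bool" where
  "bounded_op T \<longleftrightarrow> (\<forall>\<xi>\<in>l2. T \<xi> \<in> l2)
     \<and> (\<forall>\<xi>\<in>l2. \<forall>\<eta>\<in>l2. \<forall>a b. T (\<lambda>h. a * \<xi> h + b * \<eta> h) = (\<lambda>h. a * T \<xi> h + b * T \<eta> h))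
     \<and> (\<exists>C. \<forall>\<xi>\<in>l2. l2norm (T \<xi>) \<le> C * l2norm \<xi>)"

text \<open>Operator norm (meaningful for bounded operators).\<close>
definition opnorm :: "'g op \<Rightarrow> real" where
  "opnorm T = Sup {l2norm (T \<xi>) | \<xi>. \<xi> \<in> l2 \<and> l2norm \<xi> \<le> 1}"

definition op_diff :: "'g op \<Rightarrow> 'g op \<Rightarrow> 'g op" where
  "op_diff T S = (\<lambda>\<xi> h. T \<xi> h - S \<xi> h)"

definition Lambda :: "('g::mgroup \<Rightarrow> 'g \<Rightarrow> complex) \<Rightarrow> 'g \<Rightarrow> 'g op" where
  "Lambda \<sigma> g = (\<lambda>\<xi> h. \<sigma> g (inverse g * h) * \<xi> (inverse g * h))"

definition lincomb :: "('g::mgroup \<Rightarrow> 'g \<Rightarrow> complex) \<Rightarrow> ('g \<Rightarrow> complex) \<Rightarrow> 'g set \<Rightarrow> 'g op" where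
  "lincomb \<sigma> c F = (\<lambda>\<xi> h. \<Sum>g\<in>F. c g * Lambda \<sigma> g \<xi> h)"

definition CG :: "('g::mgroup \<Rightarrow> 'g \<Rightarrow> complex) \<Rightarrow> 'g op set" where
  "CG \<sigma> = {lincomb \<sigma> c F | c F. finite F}"

definition Cred :: "('g::mgroup \<Rightarrow> 'g \<Rightarrow> complex) \<Rightarrow> 'g op set" where
  "Cred \<sigma> = {x. bounded_op x \<and> (\<forall>\<epsilon>>0. \<exists>y\<in>CG \<sigma>. opnorm (op_diff x y) < \<epsilon>)}"

definition delta :: "'g \<Rightarrow> ('g \<Rightarrow> complex)" where
  "delta g = (\<lambda>h. if h = g then 1 else 0)"

definition fhat :: "'g::mgroup op \<Rightarrow> ('g \<Rightarrow> complex)" where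
  "fhat x = x (delta 1)"

definition op_sums :: "('g::mgroup \<Rightarrow> 'g \<Rightarrow> complex) \<Rightarrow> ('g \<Rightarrow> complex) \<Rightarrow> 'g op \<Rightarrow> bool" where
  "op_sums \<sigma> a T \<longleftrightarrow> bounded_op T \<and>
     ((\<lambda>F. opnorm (op_diff (lincomb \<sigma> a F) T)) \<longlongrightarrow> 0) (finite_subsets_at_top UNIV)"

definition CF :: "('g::mgroup \<Rightarrow> 'g \<Rightarrow> complex) \<Rightarrow> 'g op set" where
  "CF \<sigma> = {x \<in> Cred \<sigma>. \<exists>T. op_sums \<sigma> (fhat x) T}"

text \<open>Multipliers: M_phi (sum c(g) Lambda(g)) = sum phi(g) c(g) Lambda(g) is bounded on C(G,sigma).\<close>
definition MA :: "('g::mgroup \<Rightarrow> 'g \<Rightarrow> complex) \<Rightarrow> ('g \<Rightarrow> complex) set" where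
  "MA \<sigma> = {\<phi>. \<exists>C. \<forall>c F. finite F \<longrightarrow>
      opnorm (lincomb \<sigma> (\<lambda>g. \<phi> g * c g) F) \<le> C * opnorm (lincomb \<sigma> c F)}"

text \<open>T is the value at x of the continuous extension of M_phi from C(G,sigma) to C*_r(G,sigma).\<close>
definition is_Mext :: "('g::mgroup \<Rightarrow> 'g \<Rightarrow> complex) \<Rightarrow> ('g \<Rightarrow> complex) \<Rightarrow> 'g op \<Rightarrow> 'g op \<Rightarrow> bool" where
  "is_Mext \<sigma> \<phi> x T \<longleftrightarrow> bounded_op T \<and>
     (\<forall>\<epsilon>>0. \<exists>\<delta>>0. \<forall>c F. finite F \<and> opnorm (op_diff x (lincomb \<sigma> c F)) < \<delta> \<longrightarrow>
        opnorm (op_diff T (lincomb \<sigma> (\<lambda>g. \<phi> g * c g) F)) < \<epsilon>)"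

definition Mext :: "('g::mgroup \<Rightarrow> 'g \<Rightarrow> complex) \<Rightarrow> ('g \<Rightarrow> complex) \<Rightarrow> 'g op \<Rightarrow> 'g op" where
  "Mext \<sigma> \<phi> x = (SOME T. is_Mext \<sigma> \<phi> x T)"

definition MCF :: "('g::mgroup \<Rightarrow> 'g \<Rightarrow> complex) \<Rightarrow> ('g \<Rightarrow> complex) set" where
  "MCF \<sigma> = {\<phi>. \<forall>x\<in>Cred \<sigma>. \<exists>T. op_sums \<sigma> (\<lambda>g. \<phi> g * fhat x g) T}"

end

theory Submission
  imports Defs
begin

text \<open>For \<open>\<phi> \<in> MA\<close> the multiplier is uniformly continuous on the twisted group algebra, so it
  extends to its closure \<open>C\<^sup>*\<^sub>r(G,\<sigma>)\<close>, and the extension of \<open>x\<close> has Fourier coefficients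
  \<open>\<phi> g * fhat x g\<close>. Hence it lies in CF exactly when the multiplied Fourier series of \<open>x\<close>
  converges, which describes MCF inside MA.

  The substance is \<open>MCF \<subseteq> MA\<close>. For \<open>\<phi> \<in> MCF\<close> the partial sums
  \<open>S\<^sub>E x = (\<Sum>g\<in>E. \<phi> g * fhat x g * \<Lambda>(g))\<close> depend continuously on \<open>x\<close> and, as the series converge,
  are pointwise bounded on the Banach space \<open>C\<^sup>*\<^sub>r(G,\<sigma>)\<close>. By the Baire category theorem they are
  uniformly bounded on some ball, hence by linearity \<open>\<parallel>S\<^sub>E x\<parallel> \<le> K \<parallel>x\<parallel>\<close> for all \<open>E\<close> and \<open>x\<close>.
  For finite sums \<open>x\<close> and \<open>E\<close> their support this is the MA estimate, and the same bound identifies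
  the sum of the series with the extended multiplier.\<close>

lemma mgroup_right_inverse: "(a::'g::mgroup) * inverse a = 1"
proof -
  have "a * inverse a = (inverse (inverse a) * inverse a) * (a * inverse a)"
    by (simp add: mgroup_left_inverse)
  also have "\<dots> = inverse (inverse a) * ((inverse a * a) * inverse a)"
    by (simp add: mult.assoc)
  also have "\<dots> = 1"
    by (simp add: mgroup_left_inverse)
  finally show ?thesis .
qed

lemma mgroup_inverse_mult_cancel: "inverse (a::'g::mgroup) * (a * b) = b"
  by (simp add: mult.assoc[symmetric] mgroup_left_inverse)

lemma mgroup_mult_inverse_cancel: "(a::'g::mgroup) * (inverse a * b) = b"
  by (simp add: mult.assoc[symmetric] mgroup_right_inverse)

lemma mgroup_inverse_mult_eq_1_iff: "inverse (a::'g::mgroup) * b = 1 \<longleftrightarrow> a = b"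
proof
  assume "inverse a * b = 1"
  then have "a * (inverse a * b) = a"
    by simp
  then show "a = b"
    by (simp add: mgroup_mult_inverse_cancel)
qed (simp add: mgroup_left_inverse)

lemma bij_inverse_mult_left: "bij (\<lambda>h. inverse (g::'g::mgroup) * h)"
  by (rule bij_betwI[where g="\<lambda>h. g * h"])
    (auto simp: mgroup_inverse_mult_cancel mgroup_mult_inverse_cancel)

lemma l2norm_nonneg: "0 \<le> l2norm \<xi>"
  unfolding l2norm_def by (simp add: infsum_nonneg)

lemma L2_set_le_l2norm:
  assumes "\<xi> \<in> l2" "finite F"
  shows "L2_set (\<lambda>h. cmod (\<xi> h)) F \<le> l2norm \<xi>"
proof -
  have "(\<Sum>h\<in>F. (cmod (\<xi> h))\<^sup>2) \<le> (\<Sum>\<^sub>\<infinity>h. (cmod (\<xi> h))\<^sup>2)"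
    using assms by (intro finite_sum_le_infsum) (auto simp: l2_def)
  then show ?thesis
    unfolding L2_set_def l2norm_def by (rule real_sqrt_le_mono)
qed

lemma norm_le_l2norm: "\<xi> \<in> l2 \<Longrightarrow> cmod (\<xi> h) \<le> l2norm \<xi>"
  using L2_set_le_l2norm[of \<xi> "{h}"] by simp

lemma l2_l2norm_leI:
  assumes "0 \<le> B" "\<And>F. finite F \<Longrightarrow> L2_set (\<lambda>h. cmod (\<xi> h)) F \<le> B"
  shows "\<xi> \<in> l2 \<and> l2norm \<xi> \<le> B"
proof -
  have finite_sums: "(\<Sum>h\<in>F. (cmod (\<xi> h))\<^sup>2) \<le> B\<^sup>2" if "finite F" for F
    using assms(2)[OF that] unfolding L2_set_def by (rule sqrt_le_D)
  have summable: "(\<lambda>h. (cmod (\<xi> h))\<^sup>2) summable_on UNIV"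
    by (rule nonneg_bdd_above_summable_on) (auto intro!: bdd_aboveI[where M="B\<^sup>2"] finite_sums)
  have "(\<Sum>\<^sub>\<infinity>h. (cmod (\<xi> h))\<^sup>2) \<le> B\<^sup>2"
    by (rule infsum_le_finite_sums[OF summable]) (simp add: finite_sums)
  then have "l2norm \<xi> \<le> sqrt (B\<^sup>2)"
    unfolding l2norm_def by (rule real_sqrt_le_mono)
  with assms(1) summable show ?thesis
    by (simp add: l2_def)
qed

lemma l2_linear_combination:
  assumes "\<xi> \<in> l2" "\<eta> \<in> l2"
  shows "(\<lambda>h. a * \<xi> h + b * \<eta> h) \<in> l2
    \<and> l2norm (\<lambda>h. a * \<xi> h + b * \<eta> h) \<le> cmod a * l2norm \<xi> + cmod b * l2norm \<eta>"
proof (rule l2_l2norm_leI)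
  show "0 \<le> cmod a * l2norm \<xi> + cmod b * l2norm \<eta>"
    by (simp add: l2norm_nonneg)
  fix F :: "'a set"
  assume F: "finite F"
  have "L2_set (\<lambda>h. cmod (a * \<xi> h + b * \<eta> h)) F
      \<le> L2_set (\<lambda>h. cmod a * cmod (\<xi> h) + cmod b * cmod (\<eta> h)) F"
    by (rule L2_set_mono) (auto intro: order_trans[OF norm_triangle_ineq] simp: norm_mult)
  also have "\<dots> \<le> L2_set (\<lambda>h. cmod a * cmod (\<xi> h)) F + L2_set (\<lambda>h. cmod b * cmod (\<eta> h)) F"
    by (rule L2_set_triangle_ineq)
  also have "\<dots> = cmod a * L2_set (\<lambda>h. cmod (\<xi> h)) F + cmod b * L2_set (\<lambda>h. cmod (\<eta> h)) F"
    by (simp add: L2_set_right_distrib)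
  also have "\<dots> \<le> cmod a * l2norm \<xi> + cmod b * l2norm \<eta>"
    using L2_set_le_l2norm[OF assms(1) F] L2_set_le_l2norm[OF assms(2) F]
    by (intro add_mono mult_left_mono) auto
  finally show "L2_set (\<lambda>h. cmod (a * \<xi> h + b * \<eta> h)) F \<le> cmod a * l2norm \<xi> + cmod b * l2norm \<eta>" .
qed

lemma l2norm_cong: "(\<And>h. cmod (\<xi> h) = cmod (\<eta> h)) \<Longrightarrow> l2norm \<xi> = l2norm \<eta>"
  unfolding l2norm_def by simp

lemma l2_zero: "(\<lambda>h. 0) \<in> l2"
  and l2norm_zero: "l2norm (\<lambda>h. 0) = 0"
  by (simp_all add: l2_def l2norm_def)

lemma l2norm_eq_0_iff:
  assumes "\<xi> \<in> l2"
  shows "l2norm \<xi> = 0 \<longleftrightarrow> \<xi> = (\<lambda>h. 0)"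
proof
  assume "l2norm \<xi> = 0"
  then show "\<xi> = (\<lambda>h. 0)"
    using norm_le_l2norm[OF assms] by (simp add: fun_eq_iff)
qed (simp add: l2norm_zero)

lemma l2_scale:
  assumes "\<xi> \<in> l2"
  shows "(\<lambda>h. a * \<xi> h) \<in> l2 \<and> l2norm (\<lambda>h. a * \<xi> h) = cmod a * l2norm \<xi>"
proof -
  have "(\<lambda>h. (cmod (a * \<xi> h))\<^sup>2) = (\<lambda>h. (cmod a)\<^sup>2 * (cmod (\<xi> h))\<^sup>2)"
    by (simp add: norm_mult power_mult_distrib)
  with assms show ?thesis
    unfolding l2_def l2norm_def
    by (simp add: summable_on_cmult_right infsum_cmult_right real_sqrt_mult)
qed

lemma delta_l2: "delta k \<in> l2"
  and l2norm_delta: "l2norm (delta k) = 1"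
proof -
  have square: "(\<lambda>h. (cmod (delta k h))\<^sup>2) = (\<lambda>h. if h = k then 1 else 0)"
    by (auto simp: delta_def)
  have "((\<lambda>h. (cmod (delta k h))\<^sup>2) has_sum 1) UNIV"
    unfolding square using has_sum_finite[of "{k}" "\<lambda>h. if h = k then 1 else (0::real)"]
    by (subst has_sum_cong_neutral[where T="{k}"]) auto
  then show "delta k \<in> l2" "l2norm (delta k) = 1"
    by (auto simp: l2_def l2norm_def summable_on_def infsumI)
qed

lemma l2_pointwise_limit:
  assumes "\<And>h. (\<lambda>m. \<zeta> m h) \<longlonglongrightarrow> \<xi> h"
    and "\<And>m. m \<ge> N \<Longrightarrow> \<zeta> m \<in> l2 \<and> l2norm (\<zeta> m) \<le> B"
  shows "\<xi> \<in> l2 \<and> l2norm \<xi> \<le> B"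
proof (rule l2_l2norm_leI)
  show "0 \<le> B"
    using assms(2)[of N] l2norm_nonneg[of "\<zeta> N"] by auto
  fix F :: "'a set"
  assume F: "finite F"
  have "(\<lambda>m. L2_set (\<lambda>h. cmod (\<zeta> m h)) F) \<longlonglongrightarrow> L2_set (\<lambda>h. cmod (\<xi> h)) F"
    unfolding L2_set_def by (intro tendsto_intros assms(1))
  moreover have "\<forall>\<^sub>F m in sequentially. L2_set (\<lambda>h. cmod (\<zeta> m h)) F \<le> B"
    unfolding eventually_sequentially using assms(2) L2_set_le_l2norm[OF _ F] by (meson order_trans)
  ultimately show "L2_set (\<lambda>h. cmod (\<xi> h)) F \<le> B"
    by (rule tendsto_upperbound) simp
qed

section \<open>Bounded operators on l2\<close>

definition oplin :: "complex \<Rightarrow> 'g op \<Rightarrow> complex \<Rightarrow> 'g op \<Rightarrow> 'g op" where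
  "oplin a A b B = (\<lambda>\<xi> h. a * A \<xi> h + b * B \<xi> h)"

lemma op_diff_eq_oplin: "op_diff A B = oplin 1 A (-1) B"
  by (simp add: op_diff_def oplin_def)

lemma bounded_opI:
  assumes "\<And>\<xi>. \<xi> \<in> l2 \<Longrightarrow> T \<xi> \<in> l2"
    and "\<And>\<xi> \<eta> a b. \<xi> \<in> l2 \<Longrightarrow> \<eta> \<in> l2 \<Longrightarrow>
      T (\<lambda>h. a * \<xi> h + b * \<eta> h) = (\<lambda>h. a * T \<xi> h + b * T \<eta> h)"
    and "\<And>\<xi>. \<xi> \<in> l2 \<Longrightarrow> l2norm (T \<xi>) \<le> C * l2norm \<xi>"
  shows "bounded_op T"
  using assms unfolding bounded_op_def by blast

lemma bounded_op_l2D: "bounded_op T \<Longrightarrow> \<xi> \<in> l2 \<Longrightarrow> T \<xi> \<in> l2"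
  unfolding bounded_op_def by blast

lemma bounded_op_linearD:
  "bounded_op T \<Longrightarrow> \<xi> \<in> l2 \<Longrightarrow> \<eta> \<in> l2 \<Longrightarrow>
    T (\<lambda>h. a * \<xi> h + b * \<eta> h) = (\<lambda>h. a * T \<xi> h + b * T \<eta> h)"
  unfolding bounded_op_def by blast

lemma bounded_op_scale: "bounded_op T \<Longrightarrow> \<xi> \<in> l2 \<Longrightarrow> T (\<lambda>h. a * \<xi> h) = (\<lambda>h. a * T \<xi> h)"
  using bounded_op_linearD[of T \<xi> \<xi> a 0] by simp

lemma bounded_op_zero: "bounded_op T \<Longrightarrow> T (\<lambda>h. 0) = (\<lambda>h. 0)"
  using bounded_op_scale[of T "\<lambda>h. 0" 0] l2_zero by simp

lemma bdd_above_opnorm_set: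
  assumes "bounded_op T"
  shows "bdd_above {l2norm (T \<xi>) |\<xi>. \<xi> \<in> l2 \<and> l2norm \<xi> \<le> 1}"
proof -
  obtain C where C: "\<And>\<xi>. \<xi> \<in> l2 \<Longrightarrow> l2norm (T \<xi>) \<le> C * l2norm \<xi>"
    using assms unfolding bounded_op_def by blast
  have "l2norm (T \<xi>) \<le> \<bar>C\<bar>" if "\<xi> \<in> l2" "l2norm \<xi> \<le> 1" for \<xi>
  proof -
    have "C * l2norm \<xi> \<le> \<bar>C\<bar> * 1"
      using that l2norm_nonneg[of \<xi>] by (intro mult_mono) auto
    then show ?thesis
      using C[OF that(1)] by simp
  qed
  then show ?thesis
    by (intro bdd_aboveI[where M="\<bar>C\<bar>"]) auto
qed

lemma l2norm_le_opnorm: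
  "bounded_op T \<Longrightarrow> \<xi> \<in> l2 \<Longrightarrow> l2norm \<xi> \<le> 1 \<Longrightarrow> l2norm (T \<xi>) \<le> opnorm T"
  unfolding opnorm_def by (rule cSup_upper) (auto intro: bdd_above_opnorm_set)

lemma opnorm_nonneg:
  assumes "bounded_op T"
  shows "0 \<le> opnorm T"
proof -
  have "l2norm (T (\<lambda>h. 0)) \<le> opnorm T"
    by (rule l2norm_le_opnorm[OF assms l2_zero]) (simp add: l2norm_zero)
  then show ?thesis
    using l2norm_nonneg order_trans by blast
qed

lemma opnorm_leI:
  assumes "0 \<le> B" "\<And>\<xi>. \<xi> \<in> l2 \<Longrightarrow> l2norm (T \<xi>) \<le> B * l2norm \<xi>"
  shows "opnorm T \<le> B"
  unfolding opnorm_def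
proof (rule cSup_least)
  have "l2norm (T (\<lambda>h. 0)) \<in> {l2norm (T \<xi>) |\<xi>. \<xi> \<in> l2 \<and> l2norm \<xi> \<le> 1}"
    by (intro CollectI exI[where x="\<lambda>h. 0"]) (simp add: l2_zero l2norm_zero)
  then show "{l2norm (T \<xi>) |\<xi>. \<xi> \<in> l2 \<and> l2norm \<xi> \<le> 1} \<noteq> {}"
    by blast
  fix r
  assume "r \<in> {l2norm (T \<xi>) |\<xi>. \<xi> \<in> l2 \<and> l2norm \<xi> \<le> 1}"
  then obtain \<xi> where "r = l2norm (T \<xi>)" "\<xi> \<in> l2" "l2norm \<xi> \<le> 1"
    by auto
  then show "r \<le> B"
    using assms(2)[of \<xi>] mult_left_mono[of "l2norm \<xi>" 1 B] assms(1) by auto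
qed

lemma l2norm_apply_le:
  assumes T: "bounded_op T" and \<xi>: "\<xi> \<in> l2"
  shows "l2norm (T \<xi>) \<le> opnorm T * l2norm \<xi>"
proof (cases "l2norm \<xi> = 0")
  case True
  then show ?thesis
    using \<xi> bounded_op_zero[OF T] by (simp add: l2norm_eq_0_iff l2norm_zero)
next
  case False
  then have pos: "l2norm \<xi> > 0"
    using l2norm_nonneg[of \<xi>] by simp
  define a where "a = complex_of_real (1 / l2norm \<xi>)"
  have norm_a: "cmod a = 1 / l2norm \<xi>"
    using pos by (simp add: a_def norm_divide)
  have "l2norm (T (\<lambda>h. a * \<xi> h)) \<le> opnorm T"
    using l2_scale[OF \<xi>, of a] norm_a pos by (intro l2norm_le_opnorm T) auto
  moreover have "l2norm (T (\<lambda>h. a * \<xi> h)) = l2norm (T \<xi>) / l2norm \<xi>"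
    using bounded_op_scale[OF T \<xi>] l2_scale[OF bounded_op_l2D[OF T \<xi>]] norm_a by simp
  ultimately show ?thesis
    using pos by (simp add: divide_le_eq mult.commute)
qed

lemma opnorm_le_0_imp_zero:
  assumes "bounded_op T" "opnorm T \<le> 0" "\<xi> \<in> l2"
  shows "T \<xi> = (\<lambda>h. 0)"
proof -
  have "l2norm (T \<xi>) \<le> 0"
    using l2norm_apply_le[OF assms(1,3)] assms(2) l2norm_nonneg[of \<xi>]
    by (meson mult_nonpos_nonneg order_trans)
  then show ?thesis
    using l2norm_eq_0_iff[OF bounded_op_l2D[OF assms(1,3)]] l2norm_nonneg[of "T \<xi>"] by simp
qed

lemma opnorm_cong:
  assumes "\<And>\<xi>. \<xi> \<in> l2 \<Longrightarrow> A \<xi> = B \<xi>"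
  shows "opnorm A = opnorm B"
proof -
  have "{l2norm (A \<xi>) |\<xi>. \<xi> \<in> l2 \<and> l2norm \<xi> \<le> 1} = {l2norm (B \<xi>) |\<xi>. \<xi> \<in> l2 \<and> l2norm \<xi> \<le> 1}"
    using assms by metis
  then show ?thesis
    unfolding opnorm_def by simp
qed

lemma bounded_op_cong:
  assumes AB: "\<And>\<xi>. \<xi> \<in> l2 \<Longrightarrow> A \<xi> = B \<xi>" and A: "bounded_op A"
  shows "bounded_op B"
proof -
  obtain C where C: "\<And>\<xi>. \<xi> \<in> l2 \<Longrightarrow> l2norm (A \<xi>) \<le> C * l2norm \<xi>"
    using A unfolding bounded_op_def by blast
  show ?thesis
  proof (rule bounded_opI[where C=C])
    fix \<xi> \<eta> :: "'a \<Rightarrow> complex" and a b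
    assume "\<xi> \<in> l2" "\<eta> \<in> l2"
    moreover have "(\<lambda>h. a * \<xi> h + b * \<eta> h) \<in> l2"
      using l2_linear_combination[OF \<open>\<xi> \<in> l2\<close> \<open>\<eta> \<in> l2\<close>] by blast
    ultimately show "B (\<lambda>h. a * \<xi> h + b * \<eta> h) = (\<lambda>h. a * B \<xi> h + b * B \<eta> h)"
      using bounded_op_linearD[OF A] AB by metis
  qed (use AB C bounded_op_l2D[OF A] in metis)+
qed

lemma l2norm_oplin_apply_le:
  assumes "bounded_op A" "bounded_op B" "\<xi> \<in> l2"
  shows "oplin a A b B \<xi> \<in> l2
    \<and> l2norm (oplin a A b B \<xi>) \<le> (cmod a * opnorm A + cmod b * opnorm B) * l2norm \<xi>"
proof -
  have "oplin a A b B \<xi> \<in> l2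
      \<and> l2norm (oplin a A b B \<xi>) \<le> cmod a * l2norm (A \<xi>) + cmod b * l2norm (B \<xi>)"
    unfolding oplin_def
    by (rule l2_linear_combination[OF bounded_op_l2D[OF assms(1,3)] bounded_op_l2D[OF assms(2,3)]])
  moreover have "cmod a * l2norm (A \<xi>) + cmod b * l2norm (B \<xi>)
      \<le> cmod a * (opnorm A * l2norm \<xi>) + cmod b * (opnorm B * l2norm \<xi>)"
    by (intro add_mono mult_left_mono l2norm_apply_le assms) auto
  ultimately show ?thesis
    by (simp add: algebra_simps)
qed

lemma bounded_op_oplin:
  fixes A B :: "'g op"
  assumes "bounded_op A" "bounded_op B"
  shows "bounded_op (oplin a A b B)"
proof (rule bounded_opI)
  fix \<xi> \<eta> :: "'g \<Rightarrow> complex" and c d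
  assume "\<xi> \<in> l2" "\<eta> \<in> l2"
  note linear = bounded_op_linearD[OF _ this]
  show "oplin a A b B (\<lambda>h. c * \<xi> h + d * \<eta> h)
      = (\<lambda>h. c * oplin a A b B \<xi> h + d * oplin a A b B \<eta> h)"
    unfolding oplin_def linear[OF assms(1)] linear[OF assms(2)] by (simp add: algebra_simps)
next
  fix \<xi> :: "'g \<Rightarrow> complex"
  assume "\<xi> \<in> l2"
  then show "oplin a A b B \<xi> \<in> l2"
    and "l2norm (oplin a A b B \<xi>) \<le> (cmod a * opnorm A + cmod b * opnorm B) * l2norm \<xi>"
    using l2norm_oplin_apply_le[OF assms] by blast+
qed

lemma opnorm_oplin_le:
  assumes "bounded_op A" "bounded_op B"
  shows "opnorm (oplin a A b B) \<le> cmod a * opnorm A + cmod b * opnorm B"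
  using l2norm_oplin_apply_le[OF assms] opnorm_nonneg[OF assms(1)] opnorm_nonneg[OF assms(2)]
  by (intro opnorm_leI) auto

lemma bounded_op_diff: "bounded_op A \<Longrightarrow> bounded_op B \<Longrightarrow> bounded_op (op_diff A B)"
  by (simp add: op_diff_eq_oplin bounded_op_oplin)

lemma opnorm_diff_commute: "opnorm (op_diff A B) = opnorm (op_diff B A)"
proof -
  have "l2norm (op_diff A B \<xi>) = l2norm (op_diff B A \<xi>)" for \<xi>
    by (rule l2norm_cong) (simp add: op_diff_def norm_minus_commute)
  then show ?thesis
    unfolding opnorm_def by simp
qed

lemma opnorm_diff_self: "opnorm (op_diff A A) = 0"
proof -
  have "{l2norm (op_diff A A \<xi>) |\<xi>. \<xi> \<in> l2 \<and> l2norm \<xi> \<le> 1} = {0}"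
    using l2_zero l2norm_zero by (auto simp: op_diff_def)
  then show ?thesis
    by (simp add: opnorm_def)
qed

lemma opnorm_diff_triangle:
  assumes "bounded_op A" "bounded_op B" "bounded_op C"
  shows "opnorm (op_diff A C) \<le> opnorm (op_diff A B) + opnorm (op_diff B C)"
proof -
  have "op_diff A C = oplin 1 (op_diff A B) 1 (op_diff B C)"
    by (simp add: op_diff_def oplin_def fun_eq_iff)
  then show ?thesis
    using opnorm_oplin_le[OF bounded_op_diff[OF assms(1,2)] bounded_op_diff[OF assms(2,3)], of 1 1]
    by simp
qed

lemma opnorm_triangle_diff:
  assumes "bounded_op A" "bounded_op B"
  shows "opnorm A \<le> opnorm (op_diff A B) + opnorm B"
proof -
  have "A = oplin 1 (op_diff A B) 1 B"
    by (simp add: op_diff_def oplin_def)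
  then show ?thesis
    using opnorm_oplin_le[OF bounded_op_diff[OF assms] assms(2), of 1 1] by simp
qed

lemma abs_opnorm_diff_le:
  assumes "bounded_op A" "bounded_op B"
  shows "\<bar>opnorm A - opnorm B\<bar> \<le> opnorm (op_diff A B)"
  using opnorm_triangle_diff[OF assms] opnorm_triangle_diff[OF assms(2,1)] opnorm_diff_commute[of A B]
  by linarith

section \<open>Completeness of the bounded operators\<close>

lemma pointwise_limit_linear:
  assumes "\<And>n. bounded_op (T n)"
    and "\<And>\<xi> h. \<xi> \<in> l2 \<Longrightarrow> (\<lambda>n. T n \<xi> h) \<longlonglongrightarrow> L \<xi> h"
    and "\<xi> \<in> l2" "\<eta> \<in> l2"
  shows "L (\<lambda>h. a * \<xi> h + b * \<eta> h) = (\<lambda>h. a * L \<xi> h + b * L \<eta> h)"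
proof
  fix h
  have "(\<lambda>n. T n (\<lambda>h. a * \<xi> h + b * \<eta> h) h) \<longlonglongrightarrow> L (\<lambda>h. a * \<xi> h + b * \<eta> h) h"
    using assms l2_linear_combination by blast
  moreover have "(\<lambda>n. T n (\<lambda>h. a * \<xi> h + b * \<eta> h) h) = (\<lambda>n. a * T n \<xi> h + b * T n \<eta> h)"
    using bounded_op_linearD[OF assms(1) assms(3,4)] by simp
  moreover have "(\<lambda>n. a * T n \<xi> h + b * T n \<eta> h) \<longlonglongrightarrow> a * L \<xi> h + b * L \<eta> h"
    by (intro tendsto_intros assms)
  ultimately show "L (\<lambda>h. a * \<xi> h + b * \<eta> h) h = a * L \<xi> h + b * L \<eta> h"
    using LIMSEQ_unique by metis
qed

lemma opnorm_Cauchy_imp_pointwise_Cauchy: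
  assumes "\<And>n. bounded_op (T n)"
    and "\<And>\<epsilon>. \<epsilon> > 0 \<Longrightarrow> \<exists>N. \<forall>m\<ge>N. \<forall>n\<ge>N. opnorm (op_diff (T m) (T n)) < \<epsilon>"
    and "\<xi> \<in> l2"
  shows "Cauchy (\<lambda>n. T n \<xi> h)"
proof (rule metric_CauchyI)
  fix e :: real
  assume "e > 0"
  then have "e / (l2norm \<xi> + 1) > 0"
    using l2norm_nonneg[of \<xi>] by (simp add: add_nonneg_pos)
  then obtain N where N: "\<And>m n. m \<ge> N \<Longrightarrow> n \<ge> N \<Longrightarrow> opnorm (op_diff (T m) (T n)) < e / (l2norm \<xi> + 1)"
    using assms(2) by blast
  have "dist (T m \<xi> h) (T n \<xi> h) < e" if "m \<ge> N" "n \<ge> N" for m n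
  proof -
    have "dist (T m \<xi> h) (T n \<xi> h) \<le> l2norm (op_diff (T m) (T n) \<xi>)"
      using norm_le_l2norm[OF bounded_op_l2D[OF bounded_op_diff[OF assms(1,1)] assms(3)]]
      by (simp add: dist_norm op_diff_def)
    also have "\<dots> \<le> opnorm (op_diff (T m) (T n)) * l2norm \<xi>"
      by (intro l2norm_apply_le bounded_op_diff assms)
    also have "\<dots> \<le> e / (l2norm \<xi> + 1) * l2norm \<xi>"
      using N[OF that] l2norm_nonneg[of \<xi>] by (intro mult_right_mono) auto
    also have "\<dots> < e"
      using \<open>e > 0\<close> l2norm_nonneg[of \<xi>] by (simp add: field_simps)
    finally show ?thesis .
  qed
  then show "\<exists>N. \<forall>m\<ge>N. \<forall>n\<ge>N. dist (T m \<xi> h) (T n \<xi> h) < e"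
    by blast
qed

lemma l2norm_diff_pointwise_limit_le:
  assumes "\<And>n. bounded_op (T n)"
    and "\<And>\<xi> h. \<xi> \<in> l2 \<Longrightarrow> (\<lambda>n. T n \<xi> h) \<longlonglongrightarrow> L \<xi> h"
    and "\<And>m. m \<ge> N \<Longrightarrow> opnorm (op_diff (T n) (T m)) \<le> \<epsilon>"
    and "\<xi> \<in> l2"
  shows "op_diff (T n) L \<xi> \<in> l2 \<and> l2norm (op_diff (T n) L \<xi>) \<le> \<epsilon> * l2norm \<xi>"
proof (rule l2_pointwise_limit[where \<zeta>="\<lambda>m. op_diff (T n) (T m) \<xi>" and N=N])
  show "(\<lambda>m. op_diff (T n) (T m) \<xi> h) \<longlonglongrightarrow> op_diff (T n) L \<xi> h" for h
    unfolding op_diff_def by (intro tendsto_intros assms)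
  fix m
  assume "m \<ge> N"
  have "l2norm (op_diff (T n) (T m) \<xi>) \<le> opnorm (op_diff (T n) (T m)) * l2norm \<xi>"
    by (intro l2norm_apply_le bounded_op_diff assms)
  also have "\<dots> \<le> \<epsilon> * l2norm \<xi>"
    using assms(3)[OF \<open>m \<ge> N\<close>] l2norm_nonneg[of \<xi>] by (intro mult_right_mono) auto
  finally show "op_diff (T n) (T m) \<xi> \<in> l2 \<and> l2norm (op_diff (T n) (T m) \<xi>) \<le> \<epsilon> * l2norm \<xi>"
    using bounded_op_l2D[OF bounded_op_diff[OF assms(1,1)] assms(4)] by blast
qed

lemma bounded_op_complete:
  assumes bounded: "\<And>n. bounded_op (T n)"
    and Cauchy: "\<And>\<epsilon>. \<epsilon> > 0 \<Longrightarrow> \<exists>N. \<forall>m\<ge>N. \<forall>n\<ge>N. opnorm (op_diff (T m) (T n)) < \<epsilon>"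
  obtains L where "bounded_op L" "(\<lambda>n. opnorm (op_diff (T n) L)) \<longlonglongrightarrow> 0"
proof -
  define L :: "'a op" where "L \<xi> h = lim (\<lambda>n. T n \<xi> h)" for \<xi> h
  have lim: "(\<lambda>n. T n \<xi> h) \<longlonglongrightarrow> L \<xi> h" if "\<xi> \<in> l2" for \<xi> h
    unfolding L_def convergent_LIMSEQ_iff[symmetric]
    by (rule Cauchy_convergent[OF opnorm_Cauchy_imp_pointwise_Cauchy[OF bounded Cauchy that]])
  have tail: "\<exists>N. \<forall>n\<ge>N. \<forall>\<xi>\<in>l2. op_diff (T n) L \<xi> \<in> l2 \<and> l2norm (op_diff (T n) L \<xi>) \<le> \<epsilon> * l2norm \<xi>"
    if \<epsilon>: "\<epsilon> > 0" for \<epsilon>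
  proof -
    obtain N where "\<And>m n. m \<ge> N \<Longrightarrow> n \<ge> N \<Longrightarrow> opnorm (op_diff (T n) (T m)) < \<epsilon>"
      using Cauchy[OF \<epsilon>] by blast
    then show ?thesis
      using l2norm_diff_pointwise_limit_le[OF bounded lim] by (meson less_imp_le)
  qed
  obtain N where N: "\<And>\<xi>. \<xi> \<in> l2 \<Longrightarrow> op_diff (T N) L \<xi> \<in> l2 \<and> l2norm (op_diff (T N) L \<xi>) \<le> 1 * l2norm \<xi>"
    using tail[of 1] by auto
  have "bounded_op (op_diff (T N) L)"
    using N pointwise_limit_linear[OF bounded lim] bounded_op_linearD[OF bounded]
    by (intro bounded_opI[where C=1]) (auto simp: op_diff_def algebra_simps fun_eq_iff)
  moreover have "L = op_diff (T N) (op_diff (T N) L)"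
    by (simp add: op_diff_def)
  ultimately have "bounded_op L"
    using bounded_op_diff[OF bounded] by metis
  moreover have "(\<lambda>n. opnorm (op_diff (T n) L)) \<longlonglongrightarrow> 0"
  proof (rule LIMSEQ_I)
    fix \<epsilon> :: real
    assume "\<epsilon> > 0"
    then obtain N where "\<And>n \<xi>. n \<ge> N \<Longrightarrow> \<xi> \<in> l2 \<Longrightarrow> l2norm (op_diff (T n) L \<xi>) \<le> \<epsilon> / 2 * l2norm \<xi>"
      using tail[of "\<epsilon> / 2"] by auto
    then have "opnorm (op_diff (T n) L) \<le> \<epsilon> / 2" if "n \<ge> N" for n
      using that \<open>\<epsilon> > 0\<close> by (intro opnorm_leI) auto
    moreover have "0 \<le> opnorm (op_diff (T n) L)" for n
      by (intro opnorm_nonneg bounded_op_diff bounded \<open>bounded_op L\<close>)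
    ultimately have "norm (opnorm (op_diff (T n) L) - 0) < \<epsilon>" if "n \<ge> N" for n
      using that \<open>\<epsilon> > 0\<close> by fastforce
    then show "\<exists>N. \<forall>n\<ge>N. norm (opnorm (op_diff (T n) L) - 0) < \<epsilon>"
      by blast
  qed
  ultimately show thesis
    using that by blast
qed

lemma approximating_sequence:
  fixes e :: "'a \<Rightarrow> real"
  assumes "\<And>\<delta>. \<delta> > 0 \<Longrightarrow> \<exists>a\<in>A. e a < \<delta>"
  shows "\<exists>a :: nat \<Rightarrow> 'a. (\<forall>n. a n \<in> A) \<and> (\<forall>\<delta>>0. \<exists>N. \<forall>n\<ge>N. e (a n) < \<delta>)"
proof -
  have "\<forall>n. \<exists>a\<in>A. e a < inverse (real (Suc n))"
    using assms by simp
  then obtain a where a: "\<And>n. a n \<in> A" "\<And>n. e (a n) < inverse (real (Suc n))"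
    by metis
  have "\<forall>\<delta>>0. \<exists>N. \<forall>n\<ge>N. e (a n) < \<delta>"
  proof (intro allI impI)
    fix \<delta> :: real
    assume "\<delta> > 0"
    obtain N where N: "inverse (real (Suc N)) < \<delta>"
      using reals_Archimedean[OF \<open>\<delta> > 0\<close>] by blast
    have "e (a n) < \<delta>" if "n \<ge> N" for n
    proof -
      have "inverse (real (Suc n)) \<le> inverse (real (Suc N))"
        by (rule le_imp_inverse_le) (use that in auto)
      then show ?thesis
        using a(2)[of n] N by linarith
    qed
    then show "\<exists>N. \<forall>n\<ge>N. e (a n) < \<delta>"
      by blast
  qed
  with a(1) show ?thesis
    by blast
qed

lemma bounded_op_limit_along_approximants:
  fixes Q :: "'a \<Rightarrow> 'g op" and e :: "'a \<Rightarrow> real"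
  assumes bounded: "\<And>a. a \<in> A \<Longrightarrow> bounded_op (Q a)"
    and approx: "\<And>\<delta>. \<delta> > 0 \<Longrightarrow> \<exists>a\<in>A. e a < \<delta>"
    and Cauchy: "\<And>\<epsilon>. \<epsilon> > 0 \<Longrightarrow>
      \<exists>\<delta>>0. \<forall>a\<in>A. \<forall>b\<in>A. e a < \<delta> \<longrightarrow> e b < \<delta> \<longrightarrow> opnorm (op_diff (Q a) (Q b)) < \<epsilon>"
  obtains T where "bounded_op T"
    and "\<And>\<epsilon>. \<epsilon> > 0 \<Longrightarrow> \<exists>\<delta>>0. \<forall>a\<in>A. e a < \<delta> \<longrightarrow> opnorm (op_diff T (Q a)) < \<epsilon>"
proof -
  obtain a :: "nat \<Rightarrow> 'a" where "\<forall>n. a n \<in> A" "\<forall>\<delta>>0. \<exists>N. \<forall>n\<ge>N. e (a n) < \<delta>"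
    using approximating_sequence[OF approx] by blast
  then have a: "\<And>n. a n \<in> A"
    and eventually_close: "\<And>\<delta>. \<delta> > 0 \<Longrightarrow> \<exists>N. \<forall>n\<ge>N. e (a n) < \<delta>"
    by simp_all
  have "\<exists>N. \<forall>m\<ge>N. \<forall>n\<ge>N. opnorm (op_diff (Q (a m)) (Q (a n))) < \<epsilon>" if \<epsilon>: "\<epsilon> > 0" for \<epsilon>
  proof -
    obtain \<delta> where "\<delta> > 0"
      and \<delta>: "\<And>b c. b \<in> A \<Longrightarrow> c \<in> A \<Longrightarrow> e b < \<delta> \<Longrightarrow> e c < \<delta> \<Longrightarrow> opnorm (op_diff (Q b) (Q c)) < \<epsilon>"
      using Cauchy[OF \<epsilon>] by blast
    then show ?thesis
      using eventually_close[OF \<open>\<delta> > 0\<close>] a by metis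
  qed
  then obtain L where L: "bounded_op L" "(\<lambda>n. opnorm (op_diff (Q (a n)) L)) \<longlonglongrightarrow> 0"
    using bounded_op_complete[of "\<lambda>n. Q (a n)"] bounded a by blast
  have "\<exists>\<delta>>0. \<forall>b\<in>A. e b < \<delta> \<longrightarrow> opnorm (op_diff L (Q b)) < \<epsilon>" if "\<epsilon> > 0" for \<epsilon>
  proof -
    obtain \<delta> where "\<delta> > 0"
      and \<delta>: "\<And>b c. b \<in> A \<Longrightarrow> c \<in> A \<Longrightarrow> e b < \<delta> \<Longrightarrow> e c < \<delta> \<Longrightarrow> opnorm (op_diff (Q b) (Q c)) < \<epsilon> / 2"
      using Cauchy[of "\<epsilon> / 2"] \<open>\<epsilon> > 0\<close> by auto
    obtain N1 where N1: "\<And>n. n \<ge> N1 \<Longrightarrow> opnorm (op_diff (Q (a n)) L) < \<epsilon> / 2"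
      using order_tendstoD(2)[OF L(2), of "\<epsilon> / 2"] \<open>\<epsilon> > 0\<close> by (auto simp: eventually_sequentially)
    obtain N2 where N2: "\<And>n. n \<ge> N2 \<Longrightarrow> e (a n) < \<delta>"
      using eventually_close[OF \<open>\<delta> > 0\<close>] by blast
    define n where "n = max N1 N2"
    have "opnorm (op_diff L (Q b)) < \<epsilon>" if "b \<in> A" "e b < \<delta>" for b
    proof -
      have "opnorm (op_diff L (Q b)) \<le> opnorm (op_diff L (Q (a n))) + opnorm (op_diff (Q (a n)) (Q b))"
        using bounded a that L(1) by (intro opnorm_diff_triangle) auto
      also have "\<dots> < \<epsilon> / 2 + \<epsilon> / 2"
        using N1[of n] N2[of n] \<delta>[OF a that(1)] that(2) opnorm_diff_commute[of L]
        by (intro add_strict_mono) (auto simp: n_def)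
      finally show ?thesis
        by simp
    qed
    then show ?thesis
      using \<open>\<delta> > 0\<close> by blast
  qed
  then show thesis
    using that L(1) by blast
qed

section \<open>The twisted group algebra\<close>

lemma cocycle2_norm: "cocycle2 \<sigma> \<Longrightarrow> cmod (\<sigma> g h) = 1"
  unfolding cocycle2_def by blast

lemma Lambda_isometry:
  assumes \<sigma>: "cocycle2 \<sigma>" and \<xi>: "\<xi> \<in> l2"
  shows "Lambda \<sigma> g \<xi> \<in> l2 \<and> l2norm (Lambda \<sigma> g \<xi>) = l2norm \<xi>"
proof -
  have square: "(\<lambda>h. (cmod (Lambda \<sigma> g \<xi> h))\<^sup>2) = (\<lambda>h. (\<lambda>k. (cmod (\<xi> k))\<^sup>2) (inverse g * h))"
    by (simp add: Lambda_def norm_mult cocycle2_norm[OF \<sigma>])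
  have "(\<lambda>h. (cmod (\<xi> h))\<^sup>2) summable_on UNIV"
    using \<xi> by (simp add: l2_def)
  then have "(\<lambda>h. (cmod (Lambda \<sigma> g \<xi> h))\<^sup>2) summable_on UNIV"
    unfolding square
    using summable_on_reindex_bij_betw[OF bij_inverse_mult_left, of "\<lambda>k. (cmod (\<xi> k))\<^sup>2" g] by simp
  moreover have "(\<Sum>\<^sub>\<infinity>h. (cmod (Lambda \<sigma> g \<xi> h))\<^sup>2) = (\<Sum>\<^sub>\<infinity>h. (cmod (\<xi> h))\<^sup>2)"
    unfolding square
    using infsum_reindex_bij_betw[OF bij_inverse_mult_left, of "\<lambda>k. (cmod (\<xi> k))\<^sup>2" g] by simp
  ultimately show ?thesis
    by (simp add: l2_def l2norm_def)
qed

lemma lincomb_l2: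
  assumes \<sigma>: "cocycle2 \<sigma>" and \<xi>: "\<xi> \<in> l2" and "finite F"
  shows "lincomb \<sigma> c F \<xi> \<in> l2 \<and> l2norm (lincomb \<sigma> c F \<xi>) \<le> (\<Sum>g\<in>F. cmod (c g)) * l2norm \<xi>"
  using \<open>finite F\<close>
proof (induction F)
  case empty
  then show ?case
    by (simp add: lincomb_def l2_zero l2norm_zero)
next
  case (insert g F)
  have "lincomb \<sigma> c (insert g F) \<xi> = (\<lambda>h. c g * Lambda \<sigma> g \<xi> h + 1 * lincomb \<sigma> c F \<xi> h)"
    using insert by (simp add: lincomb_def)
  then have "lincomb \<sigma> c (insert g F) \<xi> \<in> l2 \<and> l2norm (lincomb \<sigma> c (insert g F) \<xi>)
      \<le> cmod (c g) * l2norm (Lambda \<sigma> g \<xi>) + cmod 1 * l2norm (lincomb \<sigma> c F \<xi>)"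
    using l2_linear_combination Lambda_isometry[OF \<sigma> \<xi>] insert.IH by metis
  then show ?case
    using insert Lambda_isometry[OF \<sigma> \<xi>, of g] by (auto simp: distrib_right)
qed

lemma lincomb_linear:
  "lincomb \<sigma> c F (\<lambda>h. a * \<xi> h + b * \<eta> h) = (\<lambda>h. a * lincomb \<sigma> c F \<xi> h + b * lincomb \<sigma> c F \<eta> h)"
  by (simp add: lincomb_def Lambda_def sum_distrib_left sum.distrib algebra_simps)

lemma bounded_op_lincomb: "cocycle2 \<sigma> \<Longrightarrow> finite F \<Longrightarrow> bounded_op (lincomb \<sigma> c F)"
  by (rule bounded_opI[where C="\<Sum>g\<in>F. cmod (c g)"]) (auto simp: lincomb_l2 lincomb_linear)

lemma opnorm_lincomb_le: "cocycle2 \<sigma> \<Longrightarrow> finite F \<Longrightarrow> opnorm (lincomb \<sigma> c F) \<le> (\<Sum>g\<in>F. cmod (c g))"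
  by (rule opnorm_leI) (auto simp: lincomb_l2 sum_nonneg)

lemma lincomb_cong: "(\<And>g. g \<in> F \<Longrightarrow> c g = d g) \<Longrightarrow> lincomb \<sigma> c F = lincomb \<sigma> d F"
  unfolding lincomb_def by (simp cong: sum.cong)

lemma lincomb_mono_neutral:
  assumes "finite E" "F \<subseteq> E"
  shows "lincomb \<sigma> c F = lincomb \<sigma> (\<lambda>g. if g \<in> F then c g else 0) E"
  unfolding lincomb_def by (intro ext sum.mono_neutral_cong_left) (use assms in auto)

lemma lincomb_coeff_linear:
  "lincomb \<sigma> (\<lambda>g. a * c g + b * d g) E = oplin a (lincomb \<sigma> c E) b (lincomb \<sigma> d E)"
  by (simp add: lincomb_def oplin_def sum_distrib_left sum.distrib algebra_simps fun_eq_iff)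

lemma oplin_lincomb:
  assumes "finite F" "finite E"
  shows "oplin a (lincomb \<sigma> c F) b (lincomb \<sigma> d E)
    = lincomb \<sigma> (\<lambda>g. a * (if g \<in> F then c g else 0) + b * (if g \<in> E then d g else 0)) (F \<union> E)"
  using assms lincomb_mono_neutral[of "F \<union> E" F \<sigma> c] lincomb_mono_neutral[of "F \<union> E" E \<sigma> d]
  by (simp add: lincomb_coeff_linear)

lemma fhat_lincomb:
  assumes \<sigma>: "cocycle2 \<sigma>" and "finite F"
  shows "fhat (lincomb \<sigma> c F) g = (if g \<in> F then c g else 0)"
proof -
  have "fhat (lincomb \<sigma> c F) g = (\<Sum>k\<in>F. if k = g then c g else 0)"
    unfolding fhat_def lincomb_def Lambda_def delta_def
    by (rule sum.cong) (use \<sigma> in \<open>auto simp: mgroup_inverse_mult_eq_1_iff cocycle2_def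
        mgroup_inverse_mult_cancel mgroup_left_inverse\<close>)
  then show ?thesis
    using \<open>finite F\<close> by simp
qed

lemma fhat_oplin: "fhat (oplin a x b y) g = a * fhat x g + b * fhat y g"
  by (simp add: fhat_def oplin_def)

lemma norm_fhat_le_opnorm: "bounded_op x \<Longrightarrow> cmod (fhat x g) \<le> opnorm x"
  unfolding fhat_def
  using l2norm_apply_le[of x "delta 1"] norm_le_l2norm[of "x (delta 1)" g] delta_l2 l2norm_delta
    bounded_op_l2D
  by (metis mult.right_neutral order_trans)

lemma norm_fhat_diff_le_opnorm_diff:
  "bounded_op x \<Longrightarrow> bounded_op y \<Longrightarrow> cmod (fhat x g - fhat y g) \<le> opnorm (op_diff x y)"
  using norm_fhat_le_opnorm[OF bounded_op_diff, of x y g] by (simp add: fhat_def op_diff_def)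

lemma Cred_bounded_op: "x \<in> Cred \<sigma> \<Longrightarrow> bounded_op x"
  unfolding Cred_def by blast

lemma Cred_approx:
  assumes "x \<in> Cred \<sigma>" "\<epsilon> > 0"
  obtains c F where "finite F" "opnorm (op_diff x (lincomb \<sigma> c F)) < \<epsilon>"
  using assms unfolding Cred_def CG_def by blast

lemma lincomb_in_CG: "finite F \<Longrightarrow> lincomb \<sigma> c F \<in> CG \<sigma>"
  unfolding CG_def by blast

lemma lincomb_in_Cred:
  assumes "cocycle2 \<sigma>" "finite F"
  shows "lincomb \<sigma> c F \<in> Cred \<sigma>"
proof -
  have "\<forall>\<epsilon>>0. \<exists>y\<in>CG \<sigma>. opnorm (op_diff (lincomb \<sigma> c F) y) < \<epsilon>"
    using lincomb_in_CG[OF assms(2)] opnorm_diff_self by metis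
  then show ?thesis
    unfolding Cred_def using bounded_op_lincomb[OF assms] by blast
qed

lemma Cred_oplin:
  assumes \<sigma>: "cocycle2 \<sigma>" and x: "x \<in> Cred \<sigma>" and y: "y \<in> Cred \<sigma>"
  shows "oplin a x b y \<in> Cred \<sigma>"
proof -
  have "\<exists>z\<in>CG \<sigma>. opnorm (op_diff (oplin a x b y) z) < \<epsilon>" if "\<epsilon> > 0" for \<epsilon>
  proof -
    define k where "k = cmod a + cmod b + 1"
    have "k > 0" "\<epsilon> / k > 0"
      using \<open>\<epsilon> > 0\<close> by (simp_all add: k_def add_nonneg_pos)
    obtain c F where F: "finite F" and c: "opnorm (op_diff x (lincomb \<sigma> c F)) < \<epsilon> / k"
      using Cred_approx[OF x \<open>\<epsilon> / k > 0\<close>] by blast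
    obtain d E where E: "finite E" and d: "opnorm (op_diff y (lincomb \<sigma> d E)) < \<epsilon> / k"
      using Cred_approx[OF y \<open>\<epsilon> / k > 0\<close>] by blast
    have "op_diff (oplin a x b y) (oplin a (lincomb \<sigma> c F) b (lincomb \<sigma> d E))
        = oplin a (op_diff x (lincomb \<sigma> c F)) b (op_diff y (lincomb \<sigma> d E))"
      by (simp add: op_diff_def oplin_def fun_eq_iff algebra_simps)
    then have "opnorm (op_diff (oplin a x b y) (oplin a (lincomb \<sigma> c F) b (lincomb \<sigma> d E)))
        \<le> cmod a * opnorm (op_diff x (lincomb \<sigma> c F)) + cmod b * opnorm (op_diff y (lincomb \<sigma> d E))"
      using x y F E
      by (metis opnorm_oplin_le bounded_op_diff Cred_bounded_op bounded_op_lincomb[OF \<sigma>])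
    also have "\<dots> \<le> cmod a * (\<epsilon> / k) + cmod b * (\<epsilon> / k)"
      using c d by (intro add_mono mult_left_mono) auto
    also have "\<dots> = (k - 1) * (\<epsilon> / k)"
      by (simp add: k_def distrib_right add_divide_distrib)
    also have "\<dots> < \<epsilon>"
      using \<open>k > 0\<close> \<open>\<epsilon> > 0\<close> by (simp add: field_simps)
    finally have "opnorm (op_diff (oplin a x b y) (oplin a (lincomb \<sigma> c F) b (lincomb \<sigma> d E))) < \<epsilon>" .
    moreover have "oplin a (lincomb \<sigma> c F) b (lincomb \<sigma> d E) \<in> CG \<sigma>"
      unfolding oplin_lincomb[OF F E] using F E by (intro lincomb_in_CG) simp
    ultimately show ?thesis
      by blast
  qed
  then show ?thesis
    using x y unfolding Cred_def by (blast intro: bounded_op_oplin)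
qed

lemma Cred_cong:
  assumes "x \<in> Cred \<sigma>" "\<And>\<xi>. \<xi> \<in> l2 \<Longrightarrow> x \<xi> = y \<xi>"
  shows "y \<in> Cred \<sigma>"
proof -
  have "opnorm (op_diff y z) = opnorm (op_diff x z)" for z
    by (rule opnorm_cong) (simp add: op_diff_def assms(2))
  moreover have "bounded_op y"
    using bounded_op_cong[of x y] assms Cred_bounded_op by blast
  ultimately show ?thesis
    using assms(1) unfolding Cred_def by simp
qed

lemma Cred_closed:
  assumes \<sigma>: "cocycle2 \<sigma>" and X: "\<And>n. X n \<in> Cred \<sigma>"
    and L: "bounded_op L" "(\<lambda>n. opnorm (op_diff (X n) L)) \<longlonglongrightarrow> 0"
  shows "L \<in> Cred \<sigma>"
proof -
  have "\<exists>y\<in>CG \<sigma>. opnorm (op_diff L y) < \<epsilon>" if "\<epsilon> > 0" for \<epsilon>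
  proof -
    have "\<epsilon> / 2 > 0"
      using \<open>\<epsilon> > 0\<close> by simp
    then obtain n where n: "opnorm (op_diff (X n) L) < \<epsilon> / 2"
      using order_tendstoD(2)[OF L(2)] eventually_happens' by fastforce
    obtain c F where F: "finite F" "opnorm (op_diff (X n) (lincomb \<sigma> c F)) < \<epsilon> / 2"
      by (rule Cred_approx[OF X \<open>\<epsilon> / 2 > 0\<close>])
    have "opnorm (op_diff L (lincomb \<sigma> c F))
        \<le> opnorm (op_diff L (X n)) + opnorm (op_diff (X n) (lincomb \<sigma> c F))"
      by (rule opnorm_diff_triangle[OF L(1) Cred_bounded_op[OF X] bounded_op_lincomb[OF \<sigma> F(1)]])
    also have "\<dots> < \<epsilon>"
      using n F(2) opnorm_diff_commute[of L] by simp
    finally show ?thesis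
      using lincomb_in_CG[OF F(1)] by blast
  qed
  then show ?thesis
    using L(1) unfolding Cred_def by blast
qed

section \<open>Multipliers and their extension\<close>

lemma MA_imp_Lipschitz:
  assumes \<sigma>: "cocycle2 \<sigma>" and "\<phi> \<in> MA \<sigma>"
  obtains C where "C \<ge> 0"
    and "\<And>c d F E. finite F \<Longrightarrow> finite E \<Longrightarrow>
      opnorm (op_diff (lincomb \<sigma> (\<lambda>g. \<phi> g * c g) F) (lincomb \<sigma> (\<lambda>g. \<phi> g * d g) E))
        \<le> C * opnorm (op_diff (lincomb \<sigma> c F) (lincomb \<sigma> d E))"
proof -
  obtain C where C: "\<And>c F. finite F \<Longrightarrow> opnorm (lincomb \<sigma> (\<lambda>g. \<phi> g * c g) F) \<le> C * opnorm (lincomb \<sigma> c F)"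
    using \<open>\<phi> \<in> MA \<sigma>\<close> unfolding MA_def by blast
  have "opnorm (op_diff (lincomb \<sigma> (\<lambda>g. \<phi> g * c g) F) (lincomb \<sigma> (\<lambda>g. \<phi> g * d g) E))
      \<le> max C 0 * opnorm (op_diff (lincomb \<sigma> c F) (lincomb \<sigma> d E))"
    if "finite F" "finite E" for c d F E
  proof -
    define e where "e g = 1 * (if g \<in> F then c g else 0) + (-1) * (if g \<in> E then d g else 0)" for g
    have "op_diff (lincomb \<sigma> c F) (lincomb \<sigma> d E) = lincomb \<sigma> e (F \<union> E)"
      unfolding op_diff_eq_oplin oplin_lincomb[OF that] e_def ..
    moreover have "op_diff (lincomb \<sigma> (\<lambda>g. \<phi> g * c g) F) (lincomb \<sigma> (\<lambda>g. \<phi> g * d g) E)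
        = lincomb \<sigma> (\<lambda>g. \<phi> g * e g) (F \<union> E)"
      unfolding op_diff_eq_oplin oplin_lincomb[OF that] e_def
      by (rule lincomb_cong) (auto simp: algebra_simps)
    moreover have "C * opnorm (lincomb \<sigma> e (F \<union> E)) \<le> max C 0 * opnorm (lincomb \<sigma> e (F \<union> E))"
      using that opnorm_nonneg[OF bounded_op_lincomb[OF \<sigma>]] by (intro mult_right_mono) auto
    ultimately show ?thesis
      using C[of "F \<union> E" e] that by simp
  qed
  then show thesis
    using that[of "max C 0"] by simp
qed

lemma MA_multiplier_Cauchy:
  assumes \<sigma>: "cocycle2 \<sigma>" and "\<phi> \<in> MA \<sigma>" and x: "bounded_op x" and "\<epsilon> > 0"
  shows "\<exists>\<delta>>0. \<forall>c d F E. finite F \<longrightarrow> finite E \<longrightarrow>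
    opnorm (op_diff x (lincomb \<sigma> c F)) < \<delta> \<longrightarrow> opnorm (op_diff x (lincomb \<sigma> d E)) < \<delta> \<longrightarrow>
    opnorm (op_diff (lincomb \<sigma> (\<lambda>g. \<phi> g * c g) F) (lincomb \<sigma> (\<lambda>g. \<phi> g * d g) E)) < \<epsilon>"
proof -
  obtain C where "C \<ge> 0"
    and C: "\<And>c d F E. finite F \<Longrightarrow> finite E \<Longrightarrow>
      opnorm (op_diff (lincomb \<sigma> (\<lambda>g. \<phi> g * c g) F) (lincomb \<sigma> (\<lambda>g. \<phi> g * d g) E))
        \<le> C * opnorm (op_diff (lincomb \<sigma> c F) (lincomb \<sigma> d E))"
    using MA_imp_Lipschitz[OF \<sigma> \<open>\<phi> \<in> MA \<sigma>\<close>] by blast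
  define \<delta> where "\<delta> = \<epsilon> / (2 * (C + 1))"
  have "opnorm (op_diff (lincomb \<sigma> (\<lambda>g. \<phi> g * c g) F) (lincomb \<sigma> (\<lambda>g. \<phi> g * d g) E)) < \<epsilon>"
    if F: "finite F" and E: "finite E"
      and close: "opnorm (op_diff x (lincomb \<sigma> c F)) < \<delta>" "opnorm (op_diff x (lincomb \<sigma> d E)) < \<delta>"
    for c d F E
  proof -
    have "opnorm (op_diff (lincomb \<sigma> (\<lambda>g. \<phi> g * c g) F) (lincomb \<sigma> (\<lambda>g. \<phi> g * d g) E))
        \<le> C * opnorm (op_diff (lincomb \<sigma> c F) (lincomb \<sigma> d E))"
      by (rule C[OF F E])
    also have "\<dots> \<le> C * (opnorm (op_diff x (lincomb \<sigma> c F)) + opnorm (op_diff x (lincomb \<sigma> d E)))"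
      using opnorm_diff_triangle[OF bounded_op_lincomb[OF \<sigma> F] x bounded_op_lincomb[OF \<sigma> E], of c d]
        opnorm_diff_commute[of "lincomb \<sigma> c F" x] \<open>C \<ge> 0\<close>
      by (intro mult_left_mono) auto
    also have "\<dots> \<le> C * (2 * \<delta>)"
      using close \<open>C \<ge> 0\<close> by (intro mult_left_mono) auto
    also have "\<dots> < (C + 1) * (2 * \<delta>)"
      using \<open>C \<ge> 0\<close> \<open>\<epsilon> > 0\<close> by (intro mult_strict_right_mono) (auto simp: \<delta>_def)
    also have "\<dots> = \<epsilon>"
      using \<open>C \<ge> 0\<close> by (simp add: \<delta>_def field_simps)
    finally show ?thesis .
  qed
  moreover have "\<delta> > 0"
    using \<open>\<epsilon> > 0\<close> \<open>C \<ge> 0\<close> by (simp add: \<delta>_def)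
  ultimately show ?thesis
    by blast
qed

lemma is_Mext_exists:
  assumes \<sigma>: "cocycle2 \<sigma>" and "\<phi> \<in> MA \<sigma>" and x: "x \<in> Cred \<sigma>"
  shows "\<exists>T. is_Mext \<sigma> \<phi> x T"
proof -
  define A :: "(('a \<Rightarrow> complex) \<times> 'a set) set" where "A = {(c, F). finite F}"
  define Q where "Q = (\<lambda>(c, F). lincomb \<sigma> (\<lambda>g. \<phi> g * c g) F)"
  define e where "e = (\<lambda>(c, F). opnorm (op_diff x (lincomb \<sigma> c F)))"
  have "\<exists>\<delta>>0. \<forall>a\<in>A. \<forall>b\<in>A. e a < \<delta> \<longrightarrow> e b < \<delta> \<longrightarrow> opnorm (op_diff (Q a) (Q b)) < \<epsilon>"
    if "\<epsilon> > 0" for \<epsilon>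
    using MA_multiplier_Cauchy[OF \<sigma> \<open>\<phi> \<in> MA \<sigma>\<close> Cred_bounded_op[OF x] that]
    by (auto simp: A_def Q_def e_def)
  moreover have "\<exists>a\<in>A. e a < \<delta>" if "\<delta> > 0" for \<delta>
  proof -
    obtain c F where "finite F" "opnorm (op_diff x (lincomb \<sigma> c F)) < \<delta>"
      using Cred_approx[OF x \<open>\<delta> > 0\<close>] by blast
    then show ?thesis
      by (intro bexI[of _ "(c, F)"]) (auto simp: A_def e_def)
  qed
  moreover have "bounded_op (Q a)" if "a \<in> A" for a
    using that bounded_op_lincomb[OF \<sigma>] by (auto simp: A_def Q_def)
  ultimately obtain T where "bounded_op T"
    and T: "\<And>\<epsilon>. \<epsilon> > 0 \<Longrightarrow> \<exists>\<delta>>0. \<forall>a\<in>A. e a < \<delta> \<longrightarrow> opnorm (op_diff T (Q a)) < \<epsilon>"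
    using bounded_op_limit_along_approximants[of A Q e] by blast
  have "is_Mext \<sigma> \<phi> x T"
    unfolding is_Mext_def
  proof (intro conjI allI impI \<open>bounded_op T\<close>)
    fix \<epsilon> :: real
    assume "\<epsilon> > 0"
    then show "\<exists>\<delta>>0. \<forall>c F. finite F \<and> opnorm (op_diff x (lincomb \<sigma> c F)) < \<delta> \<longrightarrow>
        opnorm (op_diff T (lincomb \<sigma> (\<lambda>g. \<phi> g * c g) F)) < \<epsilon>"
      using T[of \<epsilon>] by (auto simp: A_def Q_def e_def)
  qed
  then show ?thesis
    by blast
qed

lemma is_Mext_approx:
  assumes "x \<in> Cred \<sigma>" "is_Mext \<sigma> \<phi> x T" "\<epsilon> > 0" "\<eta> > 0"
  obtains c F where "finite F" "opnorm (op_diff x (lincomb \<sigma> c F)) < \<eta>"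
    "opnorm (op_diff T (lincomb \<sigma> (\<lambda>g. \<phi> g * c g) F)) < \<epsilon>"
proof -
  obtain \<delta> where "\<delta> > 0" and \<delta>: "\<And>c F. finite F \<Longrightarrow> opnorm (op_diff x (lincomb \<sigma> c F)) < \<delta> \<Longrightarrow>
      opnorm (op_diff T (lincomb \<sigma> (\<lambda>g. \<phi> g * c g) F)) < \<epsilon>"
    using assms(2,3) unfolding is_Mext_def by meson
  have "min \<delta> \<eta> > 0"
    using \<open>\<delta> > 0\<close> assms(4) by simp
  then obtain c F where F: "finite F" and close: "opnorm (op_diff x (lincomb \<sigma> c F)) < min \<delta> \<eta>"
    by (rule Cred_approx[OF assms(1)])
  show thesis
  proof (rule that[OF F])
    show "opnorm (op_diff x (lincomb \<sigma> c F)) < \<eta>"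
      using close by simp
    show "opnorm (op_diff T (lincomb \<sigma> (\<lambda>g. \<phi> g * c g) F)) < \<epsilon>"
      using \<delta>[OF F] close by simp
  qed
qed

lemma is_Mext_unique:
  assumes \<sigma>: "cocycle2 \<sigma>" and x: "x \<in> Cred \<sigma>"
    and T1: "is_Mext \<sigma> \<phi> x T1" and T2: "is_Mext \<sigma> \<phi> x T2" and "\<xi> \<in> l2"
  shows "T1 \<xi> = T2 \<xi>"
proof -
  have bounded: "bounded_op T1" "bounded_op T2"
    using T1 T2 unfolding is_Mext_def by auto
  have "opnorm (op_diff T1 T2) \<le> 0 + \<epsilon>" if "\<epsilon> > 0" for \<epsilon>
  proof -
    obtain \<delta> where "\<delta> > 0" and \<delta>: "\<And>c F. finite F \<Longrightarrow> opnorm (op_diff x (lincomb \<sigma> c F)) < \<delta> \<Longrightarrow>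
        opnorm (op_diff T2 (lincomb \<sigma> (\<lambda>g. \<phi> g * c g) F)) < \<epsilon> / 2"
      using T2 \<open>\<epsilon> > 0\<close> unfolding is_Mext_def by (meson half_gt_zero)
    have "\<epsilon> / 2 > 0"
      using \<open>\<epsilon> > 0\<close> by simp
    then obtain c F where F: "finite F" "opnorm (op_diff x (lincomb \<sigma> c F)) < \<delta>"
      and close1: "opnorm (op_diff T1 (lincomb \<sigma> (\<lambda>g. \<phi> g * c g) F)) < \<epsilon> / 2"
      by (rule is_Mext_approx[OF x T1 _ \<open>\<delta> > 0\<close>])
    have "opnorm (op_diff T1 T2) \<le> opnorm (op_diff T1 (lincomb \<sigma> (\<lambda>g. \<phi> g * c g) F))
        + opnorm (op_diff (lincomb \<sigma> (\<lambda>g. \<phi> g * c g) F) T2)"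
      by (rule opnorm_diff_triangle[OF bounded(1) bounded_op_lincomb[OF \<sigma> F(1)] bounded(2)])
    also have "\<dots> < \<epsilon> / 2 + \<epsilon> / 2"
      using close1 \<delta>[OF F] opnorm_diff_commute[of T2] by (intro add_strict_mono) auto
    finally show ?thesis
      by simp
  qed
  then have "opnorm (op_diff T1 T2) \<le> 0"
    by (rule field_le_epsilon)
  then have "op_diff T1 T2 \<xi> = (\<lambda>h. 0)"
    by (rule opnorm_le_0_imp_zero[OF bounded_op_diff[OF bounded] _ \<open>\<xi> \<in> l2\<close>])
  then show ?thesis
    by (simp add: op_diff_def fun_eq_iff)
qed

lemma is_Mext_in_Cred:
  assumes "x \<in> Cred \<sigma>" "is_Mext \<sigma> \<phi> x T"
  shows "T \<in> Cred \<sigma>"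
proof -
  have "\<exists>y\<in>CG \<sigma>. opnorm (op_diff T y) < \<epsilon>" if \<epsilon>: "\<epsilon> > 0" for \<epsilon>
  proof -
    obtain c F where "finite F" "opnorm (op_diff T (lincomb \<sigma> (\<lambda>g. \<phi> g * c g) F)) < \<epsilon>"
      by (rule is_Mext_approx[OF assms \<epsilon> zero_less_one])
    then show ?thesis
      using lincomb_in_CG by blast
  qed
  then show ?thesis
    using assms(2) unfolding is_Mext_def Cred_def by blast
qed

lemma fhat_is_Mext:
  assumes \<sigma>: "cocycle2 \<sigma>" and x: "x \<in> Cred \<sigma>" and T: "is_Mext \<sigma> \<phi> x T"
  shows "fhat T = (\<lambda>g. \<phi> g * fhat x g)"
proof
  fix g
  have "cmod (fhat T g - \<phi> g * fhat x g) \<le> 0 + \<epsilon>" if "\<epsilon> > 0" for \<epsilon>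
  proof -
    define \<epsilon>' where "\<epsilon>' = \<epsilon> / (1 + cmod (\<phi> g))"
    have "\<epsilon>' > 0"
      using \<open>\<epsilon> > 0\<close> by (simp add: \<epsilon>'_def add_pos_nonneg)
    obtain c F where F: "finite F" and close: "opnorm (op_diff x (lincomb \<sigma> c F)) < \<epsilon>'"
      "opnorm (op_diff T (lincomb \<sigma> (\<lambda>g. \<phi> g * c g) F)) < \<epsilon>'"
      by (rule is_Mext_approx[OF x T \<open>\<epsilon>' > 0\<close> \<open>\<epsilon>' > 0\<close>])
    have "fhat T g - \<phi> g * fhat x g = (fhat T g - fhat (lincomb \<sigma> (\<lambda>g. \<phi> g * c g) F) g)
        + \<phi> g * (fhat (lincomb \<sigma> c F) g - fhat x g)"
      by (simp add: fhat_lincomb[OF \<sigma> F] algebra_simps)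
    then have "cmod (fhat T g - \<phi> g * fhat x g)
        \<le> cmod (fhat T g - fhat (lincomb \<sigma> (\<lambda>g. \<phi> g * c g) F) g)
          + cmod (\<phi> g) * cmod (fhat (lincomb \<sigma> c F) g - fhat x g)"
      by (metis norm_triangle_ineq norm_mult)
    also have "\<dots> \<le> opnorm (op_diff T (lincomb \<sigma> (\<lambda>g. \<phi> g * c g) F))
        + cmod (\<phi> g) * opnorm (op_diff (lincomb \<sigma> c F) x)"
      using T Cred_bounded_op[OF x] unfolding is_Mext_def
      by (intro add_mono mult_left_mono norm_fhat_diff_le_opnorm_diff bounded_op_lincomb[OF \<sigma> F]) auto
    also have "\<dots> \<le> (1 + cmod (\<phi> g)) * \<epsilon>'"
      using close opnorm_diff_commute[of x "lincomb \<sigma> c F"]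
      by (simp add: distrib_right mult_left_mono add_mono less_imp_le)
    also have "\<dots> = \<epsilon>"
      using norm_ge_zero[of "\<phi> g"] unfolding \<epsilon>'_def by (simp add: add_nonneg_eq_0_iff)
    finally show ?thesis
      by simp
  qed
  then show "fhat T g = \<phi> g * fhat x g"
    using field_le_epsilon[of "cmod (fhat T g - \<phi> g * fhat x g)" 0] by simp
qed

lemma is_Mext_Mext:
  assumes "cocycle2 \<sigma>" "\<phi> \<in> MA \<sigma>" "x \<in> Cred \<sigma>"
  shows "is_Mext \<sigma> \<phi> x (Mext \<sigma> \<phi> x)"
  unfolding Mext_def by (rule someI_ex[OF is_Mext_exists[OF assms]])

definition mult_partial_sum :: "('g::mgroup \<Rightarrow> 'g \<Rightarrow> complex) \<Rightarrow> ('g \<Rightarrow> complex) \<Rightarrow> 'g set \<Rightarrow> 'g op \<Rightarrow> 'g op"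
  where "mult_partial_sum \<sigma> \<phi> E x = lincomb \<sigma> (\<lambda>g. \<phi> g * fhat x g) E"

lemma bounded_op_mult_partial_sum: "cocycle2 \<sigma> \<Longrightarrow> finite E \<Longrightarrow> bounded_op (mult_partial_sum \<sigma> \<phi> E x)"
  unfolding mult_partial_sum_def by (rule bounded_op_lincomb)

lemma mult_partial_sum_oplin:
  "mult_partial_sum \<sigma> \<phi> E (oplin a x b y) = oplin a (mult_partial_sum \<sigma> \<phi> E x) b (mult_partial_sum \<sigma> \<phi> E y)"
  unfolding mult_partial_sum_def fhat_oplin lincomb_coeff_linear[symmetric]
  by (simp add: algebra_simps)

lemma mult_partial_sum_lincomb:
  assumes "cocycle2 \<sigma>" "finite E" "F \<subseteq> E"
  shows "mult_partial_sum \<sigma> \<phi> E (lincomb \<sigma> c F) = lincomb \<sigma> (\<lambda>g. \<phi> g * c g) F"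
proof -
  have "finite F"
    using assms(2,3) by (rule finite_subset[rotated])
  then have "mult_partial_sum \<sigma> \<phi> E (lincomb \<sigma> c F) = lincomb \<sigma> (\<lambda>g. if g \<in> F then \<phi> g * c g else 0) E"
    unfolding mult_partial_sum_def by (intro lincomb_cong) (simp add: fhat_lincomb[OF assms(1)])
  also have "\<dots> = lincomb \<sigma> (\<lambda>g. \<phi> g * c g) F"
    by (rule lincomb_mono_neutral[symmetric, OF assms(2,3)])
  finally show ?thesis .
qed

lemma opnorm_mult_partial_sum_le:
  assumes "cocycle2 \<sigma>" "finite E" "bounded_op x"
  shows "opnorm (mult_partial_sum \<sigma> \<phi> E x) \<le> (\<Sum>g\<in>E. cmod (\<phi> g)) * opnorm x"
proof -
  have "opnorm (mult_partial_sum \<sigma> \<phi> E x) \<le> (\<Sum>g\<in>E. cmod (\<phi> g * fhat x g))"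
    unfolding mult_partial_sum_def by (rule opnorm_lincomb_le[OF assms(1,2)])
  also have "\<dots> \<le> (\<Sum>g\<in>E. cmod (\<phi> g) * opnorm x)"
    by (intro sum_mono) (simp add: norm_mult norm_fhat_le_opnorm[OF assms(3)] mult_left_mono)
  finally show ?thesis
    by (simp add: sum_distrib_right)
qed

lemma opnorm_mult_partial_sum_le_union:
  assumes \<sigma>: "cocycle2 \<sigma>" and "finite F" "finite F0" and x: "bounded_op x"
  shows "opnorm (mult_partial_sum \<sigma> \<phi> F x)
    \<le> opnorm (mult_partial_sum \<sigma> \<phi> (F \<union> F0) x) + (\<Sum>g\<in>F0. cmod (\<phi> g)) * opnorm x"
proof -
  have finite: "finite (F \<union> F0)" "finite (F0 - F)"
    using assms(2,3) by auto
  note bounded = bounded_op_mult_partial_sum[OF \<sigma> finite(1)] bounded_op_mult_partial_sum[OF \<sigma> finite(2)]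
  have "sum f (F \<union> F0) = sum f F + sum f (F0 - F)" for f :: "'a \<Rightarrow> complex"
    using sum.union_disjoint[of F "F0 - F" f] assms(2,3) by (simp add: Un_Diff_cancel)
  then have "mult_partial_sum \<sigma> \<phi> F x
      = oplin 1 (mult_partial_sum \<sigma> \<phi> (F \<union> F0) x) (-1) (mult_partial_sum \<sigma> \<phi> (F0 - F) x)"
    by (simp add: mult_partial_sum_def oplin_def lincomb_def)
  then have "opnorm (mult_partial_sum \<sigma> \<phi> F x)
      \<le> opnorm (mult_partial_sum \<sigma> \<phi> (F \<union> F0) x) + opnorm (mult_partial_sum \<sigma> \<phi> (F0 - F) x)"
    using opnorm_oplin_le[OF bounded, where a=1 and b="-1"] by simp
  also have "opnorm (mult_partial_sum \<sigma> \<phi> (F0 - F) x) \<le> (\<Sum>g\<in>F0 - F. cmod (\<phi> g)) * opnorm x"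
    by (rule opnorm_mult_partial_sum_le[OF \<sigma> finite(2) x])
  also have "\<dots> \<le> (\<Sum>g\<in>F0. cmod (\<phi> g)) * opnorm x"
    using assms(3) opnorm_nonneg[OF x] by (intro mult_right_mono sum_mono2) auto
  finally show ?thesis
    by simp
qed

lemma abs_opnorm_mult_partial_sum_diff_le:
  assumes \<sigma>: "cocycle2 \<sigma>" and "finite E" and "bounded_op a" "bounded_op x"
  shows "\<bar>opnorm (mult_partial_sum \<sigma> \<phi> E a) - opnorm (mult_partial_sum \<sigma> \<phi> E x)\<bar>
    \<le> (\<Sum>g\<in>E. cmod (\<phi> g)) * opnorm (op_diff a x)"
proof -
  have "op_diff (mult_partial_sum \<sigma> \<phi> E a) (mult_partial_sum \<sigma> \<phi> E x)
      = mult_partial_sum \<sigma> \<phi> E (op_diff a x)"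
    by (simp add: op_diff_eq_oplin mult_partial_sum_oplin)
  then have "\<bar>opnorm (mult_partial_sum \<sigma> \<phi> E a) - opnorm (mult_partial_sum \<sigma> \<phi> E x)\<bar>
      \<le> opnorm (mult_partial_sum \<sigma> \<phi> E (op_diff a x))"
    using abs_opnorm_diff_le[OF bounded_op_mult_partial_sum[OF \<sigma> \<open>finite E\<close>]
        bounded_op_mult_partial_sum[OF \<sigma> \<open>finite E\<close>], of \<phi> a \<phi> x]
    by simp
  also have "\<dots> \<le> (\<Sum>g\<in>E. cmod (\<phi> g)) * opnorm (op_diff a x)"
    by (intro opnorm_mult_partial_sum_le \<sigma> \<open>finite E\<close> bounded_op_diff assms(3,4))
  finally show ?thesis .
qed

section \<open>Uniform boundedness of the partial sums\<close>

lemma (in Metric_space) closedin_sublevel_family: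
  assumes "\<And>i. i \<in> I \<Longrightarrow> continuous_map mtopology euclideanreal (f i)"
  shows "closedin mtopology {x \<in> M. \<forall>i\<in>I. f i x \<le> k}"
proof -
  have "closedin mtopology {x \<in> topspace mtopology. f i x \<in> {..k}}" if "i \<in> I" for i
    by (rule closedin_continuous_map_preimage[OF assms[OF that]]) simp
  then have "closedin mtopology (\<Inter> (insert M ((\<lambda>i. {x \<in> topspace mtopology. f i x \<in> {..k}}) ` I)))"
    by (intro closedin_Inter) auto
  moreover have "\<Inter> (insert M ((\<lambda>i. {x \<in> topspace mtopology. f i x \<in> {..k}}) ` I))
      = {x \<in> M. \<forall>i\<in>I. f i x \<le> k}"
    by auto
  ultimately show ?thesis
    by simp
qed

lemma (in Metric_space) mcomplete_pointwise_bounded_imp_bounded_on_mball: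
  assumes "mcomplete" "M \<noteq> {}"
    and continuous: "\<And>i. i \<in> I \<Longrightarrow> continuous_map mtopology euclideanreal (f i)"
    and bounded: "\<And>x. x \<in> M \<Longrightarrow> \<exists>B. \<forall>i\<in>I. f i x \<le> B"
  shows "\<exists>x0 r k. x0 \<in> M \<and> r > 0 \<and> (\<forall>x\<in>mball x0 r. \<forall>i\<in>I. f i x \<le> k)"
proof -
  define E where "E k = {x \<in> M. \<forall>i\<in>I. f i x \<le> real k}" for k :: nat
  have closed: "closedin mtopology (E k)" for k
    unfolding E_def by (rule closedin_sublevel_family[OF continuous])
  have cover: "\<Union> (range E) = M"
  proof
    show "M \<subseteq> \<Union> (range E)"
    proof
      fix x
      assume "x \<in> M"
      then obtain B where "\<forall>i\<in>I. f i x \<le> B"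
        using bounded by blast
      then have "x \<in> E (nat \<lceil>B\<rceil>)"
        using \<open>x \<in> M\<close> real_nat_ceiling_ge[of B] by (auto simp: E_def intro: order_trans)
      then show "x \<in> \<Union> (range E)"
        by blast
    qed
  qed (auto simp: E_def)
  have "\<exists>k. mtopology interior_of E k \<noteq> {}"
  proof (rule ccontr)
    assume "\<nexists>k. mtopology interior_of E k \<noteq> {}"
    then have "mtopology interior_of \<Union> (range E) = {}"
      using closed by (intro metric_Baire_category_alt \<open>mcomplete\<close>) auto
    then show False
      using \<open>M \<noteq> {}\<close> interior_of_topspace[of mtopology] by (simp add: cover)
  qed
  then obtain k x0 where x0: "x0 \<in> mtopology interior_of E k"
    by blast
  then obtain r where "r > 0" "mball x0 r \<subseteq> mtopology interior_of E k"
    using openin_interior_of[of mtopology "E k"] unfolding openin_mtopology by blast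
  then have "mball x0 r \<subseteq> E k"
    using interior_of_subset[of mtopology "E k"] by blast
  moreover have "x0 \<in> M"
    using x0 interior_of_subset[of mtopology "E k"] by (auto simp: E_def)
  ultimately show ?thesis
    using \<open>r > 0\<close> unfolding E_def by blast
qed

definition op_dist :: "'g op \<Rightarrow> 'g op \<Rightarrow> real" where
  "op_dist x y = (if bounded_op x \<and> bounded_op y then opnorm (op_diff x y) else 0)"

text \<open>Operators are functions on all of \<open>G \<rightarrow> \<complex>\<close>, but only their values on l2 matter;
  normalising them to zero off l2 makes \<^const>\<open>op_dist\<close> a genuine metric.\<close>

definition Cred0 :: "('g::mgroup \<Rightarrow> 'g \<Rightarrow> complex) \<Rightarrow> 'g op set" where
  "Cred0 \<sigma> = {x \<in> Cred \<sigma>. \<forall>\<xi>. \<xi> \<notin> l2 \<longrightarrow> x \<xi> = (\<lambda>h. 0)}"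

definition restrict_l2 :: "'g op \<Rightarrow> 'g op" where
  "restrict_l2 x \<xi> = (if \<xi> \<in> l2 then x \<xi> else (\<lambda>h. 0))"

lemma Cred0_bounded_op: "x \<in> Cred0 \<sigma> \<Longrightarrow> bounded_op x"
  unfolding Cred0_def by (blast intro: Cred_bounded_op)

lemma restrict_l2_in_Cred0: "x \<in> Cred \<sigma> \<Longrightarrow> restrict_l2 x \<in> Cred0 \<sigma>"
  using Cred_cong[of x \<sigma> "restrict_l2 x"] by (simp add: Cred0_def restrict_l2_def)

lemma opnorm_diff_restrict_l2: "opnorm (op_diff y (restrict_l2 x)) = opnorm (op_diff y x)"
  by (rule opnorm_cong) (simp add: op_diff_def restrict_l2_def)

lemma mult_partial_sum_restrict_l2: "mult_partial_sum \<sigma> \<phi> F (restrict_l2 x) = mult_partial_sum \<sigma> \<phi> F x"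
  by (simp add: mult_partial_sum_def fhat_def restrict_l2_def delta_l2)

lemma Metric_space_Cred0:
  fixes \<sigma> :: "'g::mgroup \<Rightarrow> 'g \<Rightarrow> complex"
  shows "Metric_space (Cred0 \<sigma>) op_dist"
proof
  fix x y z :: "'g op"
  show "0 \<le> op_dist x y"
    by (simp add: op_dist_def opnorm_nonneg bounded_op_diff)
  show "op_dist x y = op_dist y x"
    by (simp add: op_dist_def opnorm_diff_commute conj_commute)
  assume x: "x \<in> Cred0 \<sigma>" and y: "y \<in> Cred0 \<sigma>"
  then have bounded: "bounded_op x" "bounded_op y"
    by (simp_all add: Cred0_bounded_op)
  show "op_dist x y = 0 \<longleftrightarrow> x = y"
  proof
    assume "op_dist x y = 0"
    then have "op_diff x y \<xi> = (\<lambda>h. 0)" if "\<xi> \<in> l2" for \<xi>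
      using opnorm_le_0_imp_zero[OF bounded_op_diff[OF bounded] _ that] bounded by (simp add: op_dist_def)
    then have "x \<xi> = y \<xi>" for \<xi>
      using x y by (cases "\<xi> \<in> l2") (auto simp: Cred0_def op_diff_def fun_eq_iff)
    then show "x = y"
      by blast
  qed (simp add: op_dist_def opnorm_diff_self)
  assume "z \<in> Cred0 \<sigma>"
  then have "bounded_op z"
    by (rule Cred0_bounded_op)
  then show "op_dist x z \<le> op_dist x y + op_dist y z"
    using opnorm_diff_triangle[OF bounded(1,2) \<open>bounded_op z\<close>] bounded by (simp add: op_dist_def)
qed

lemma mcomplete_Cred0:
  assumes \<sigma>: "cocycle2 \<sigma>"
  shows "Metric_space.mcomplete (Cred0 \<sigma>) op_dist"
proof -
  interpret Cred0: Metric_space "Cred0 \<sigma>" op_dist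
    by (rule Metric_space_Cred0)
  have "\<exists>L. limitin Cred0.mtopology X L sequentially" if "Cred0.MCauchy X" for X
  proof -
    have X: "\<And>n. X n \<in> Cred0 \<sigma>"
      and Cauchy: "\<And>\<epsilon>. \<epsilon> > 0 \<Longrightarrow> \<exists>N. \<forall>m n. N \<le> m \<longrightarrow> N \<le> n \<longrightarrow> op_dist (X m) (X n) < \<epsilon>"
      using that unfolding Cred0.MCauchy_def by auto
    have bounded: "bounded_op (X n)" for n
      using X[of n] by (rule Cred0_bounded_op)
    have "\<exists>N. \<forall>m\<ge>N. \<forall>n\<ge>N. opnorm (op_diff (X m) (X n)) < \<epsilon>" if "\<epsilon> > 0" for \<epsilon>
      using Cauchy[OF that] bounded by (simp add: op_dist_def)
    then obtain L where L: "bounded_op L" "(\<lambda>n. opnorm (op_diff (X n) L)) \<longlonglongrightarrow> 0"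
      by (rule bounded_op_complete[OF bounded])
    have "L \<in> Cred \<sigma>"
      using Cred_closed[OF \<sigma> _ L] X by (simp add: Cred0_def)
    then have L0: "restrict_l2 L \<in> Cred0 \<sigma>"
      by (rule restrict_l2_in_Cred0)
    then have "op_dist (X n) (restrict_l2 L) = opnorm (op_diff (X n) L)" for n
      using bounded Cred0_bounded_op[OF L0] by (simp add: op_dist_def opnorm_diff_restrict_l2)
    then have "limitin Cred0.mtopology X (restrict_l2 L) sequentially"
      unfolding Cred0.limitin_metric
      using L0 X order_tendstoD(2)[OF L(2)] by (auto elim: eventually_mono)
    then show ?thesis
      by blast
  qed
  then show ?thesis
    unfolding Cred0.mcomplete_def by blast
qed

lemma continuous_map_opnorm_mult_partial_sum:
  assumes \<sigma>: "cocycle2 \<sigma>" and "finite E"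
  shows "continuous_map (Metric_space.mtopology (Cred0 \<sigma>) op_dist) euclideanreal
    (\<lambda>x. opnorm (mult_partial_sum \<sigma> \<phi> E x))"
proof -
  interpret Cred0: Metric_space "Cred0 \<sigma>" op_dist
    by (rule Metric_space_Cred0)
  define c where "c = (\<Sum>g\<in>E. cmod (\<phi> g))"
  have "c \<ge> 0"
    by (simp add: c_def sum_nonneg)
  have "dist (opnorm (mult_partial_sum \<sigma> \<phi> E a)) (opnorm (mult_partial_sum \<sigma> \<phi> E x)) < \<epsilon>"
    if "a \<in> Cred0 \<sigma>" "x \<in> Cred0 \<sigma>" "op_dist a x < \<epsilon> / (c + 1)" "\<epsilon> > 0" for a x \<epsilon>
  proof -
    have "dist (opnorm (mult_partial_sum \<sigma> \<phi> E a)) (opnorm (mult_partial_sum \<sigma> \<phi> E x))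
        \<le> c * op_dist a x"
      using abs_opnorm_mult_partial_sum_diff_le[OF \<sigma> \<open>finite E\<close>] that(1,2)
      by (simp add: c_def dist_real_def op_dist_def Cred0_bounded_op)
    also have "\<dots> \<le> c * (\<epsilon> / (c + 1))"
      using that(3) \<open>c \<ge> 0\<close> by (intro mult_left_mono) auto
    also have "\<dots> < (c + 1) * (\<epsilon> / (c + 1))"
      using \<open>c \<ge> 0\<close> \<open>\<epsilon> > 0\<close> by (intro mult_strict_right_mono) auto
    also have "\<dots> = \<epsilon>"
      using \<open>c \<ge> 0\<close> by simp
    finally show ?thesis .
  qed
  then have "continuous_map Cred0.mtopology Met_TC.mtopology (\<lambda>x. opnorm (mult_partial_sum \<sigma> \<phi> E x))"
    unfolding Cred0.metric_continuous_map[OF Met_TC.Metric_space_axioms]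
    using \<open>c \<ge> 0\<close> by (metis add_nonneg_pos divide_pos_pos zero_less_one UNIV_I subsetI)
  then show ?thesis
    by simp
qed

lemma MCF_partial_sums_bounded:
  assumes \<sigma>: "cocycle2 \<sigma>" and "\<phi> \<in> MCF \<sigma>" and x: "x \<in> Cred \<sigma>"
  shows "\<exists>B. \<forall>F. finite F \<longrightarrow> opnorm (mult_partial_sum \<sigma> \<phi> F x) \<le> B"
proof -
  obtain T where "op_sums \<sigma> (\<lambda>g. \<phi> g * fhat x g) T"
    using assms unfolding MCF_def by blast
  then have T: "bounded_op T"
    and lim: "((\<lambda>F. opnorm (op_diff (mult_partial_sum \<sigma> \<phi> F x) T)) \<longlongrightarrow> 0) (finite_subsets_at_top UNIV)"
    unfolding op_sums_def mult_partial_sum_def by auto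
  have "\<forall>\<^sub>F F in finite_subsets_at_top UNIV. opnorm (op_diff (mult_partial_sum \<sigma> \<phi> F x) T) < 1"
    using order_tendstoD(2)[OF lim zero_less_one] .
  then obtain F0 where "finite F0"
    and F0: "\<And>F. finite F \<Longrightarrow> F0 \<subseteq> F \<Longrightarrow> opnorm (op_diff (mult_partial_sum \<sigma> \<phi> F x) T) < 1"
    unfolding eventually_finite_subsets_at_top by auto
  have "opnorm (mult_partial_sum \<sigma> \<phi> F x) \<le> (1 + opnorm T) + (\<Sum>g\<in>F0. cmod (\<phi> g)) * opnorm x"
    if "finite F" for F
  proof -
    have "finite (F \<union> F0)"
      using \<open>finite F\<close> \<open>finite F0\<close> by simp
    then have "opnorm (mult_partial_sum \<sigma> \<phi> (F \<union> F0) x)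
        \<le> opnorm (op_diff (mult_partial_sum \<sigma> \<phi> (F \<union> F0) x) T) + opnorm T"
      by (intro opnorm_triangle_diff bounded_op_mult_partial_sum \<sigma> T)
    also have "\<dots> \<le> 1 + opnorm T"
      using F0[OF \<open>finite (F \<union> F0)\<close>] by simp
    finally show ?thesis
      using opnorm_mult_partial_sum_le_union[OF \<sigma> that \<open>finite F0\<close> Cred_bounded_op[OF x], of \<phi>]
      by linarith
  qed
  then show ?thesis
    by blast
qed

lemma MCF_partial_sums_bounded_on_ball:
  assumes \<sigma>: "cocycle2 \<sigma>" and "\<phi> \<in> MCF \<sigma>"
  shows "\<exists>x0 r k. x0 \<in> Cred \<sigma> \<and> r > 0 \<and> (\<forall>x\<in>Cred \<sigma>. opnorm (op_diff x0 x) < r \<longrightarrow>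
    (\<forall>F. finite F \<longrightarrow> opnorm (mult_partial_sum \<sigma> \<phi> F x) \<le> k))"
proof -
  interpret Cred0: Metric_space "Cred0 \<sigma>" op_dist
    by (rule Metric_space_Cred0)
  have "lincomb \<sigma> (\<lambda>g. 0) {} \<in> Cred0 \<sigma>"
    using lincomb_in_Cred[OF \<sigma>, of "{}"] by (simp add: Cred0_def lincomb_def)
  then have "Cred0 \<sigma> \<noteq> {}"
    by blast
  moreover have continuous: "continuous_map Cred0.mtopology euclideanreal
      (\<lambda>x. opnorm (mult_partial_sum \<sigma> \<phi> F x))" if "F \<in> {F. finite F}" for F
    using continuous_map_opnorm_mult_partial_sum[OF \<sigma>] that by simp
  moreover have "\<exists>B. \<forall>F\<in>{F. finite F}. opnorm (mult_partial_sum \<sigma> \<phi> F x) \<le> B" if "x \<in> Cred0 \<sigma>" for x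
    using MCF_partial_sums_bounded[OF assms] that by (simp add: Cred0_def)
  ultimately have "\<exists>x0 r k. x0 \<in> Cred0 \<sigma> \<and> r > 0 \<and>
      (\<forall>x\<in>Cred0.mball x0 r. \<forall>F\<in>{F. finite F}. opnorm (mult_partial_sum \<sigma> \<phi> F x) \<le> k)"
    by (rule Cred0.mcomplete_pointwise_bounded_imp_bounded_on_mball[OF mcomplete_Cred0[OF \<sigma>]])
  then obtain x0 r k where "x0 \<in> Cred0 \<sigma>" "r > 0"
    and ball: "\<forall>x\<in>Cred0.mball x0 r. \<forall>F\<in>{F. finite F}. opnorm (mult_partial_sum \<sigma> \<phi> F x) \<le> k"
    by blast
  have "opnorm (mult_partial_sum \<sigma> \<phi> F x) \<le> k"
    if "x \<in> Cred \<sigma>" "opnorm (op_diff x0 x) < r" and "finite F" for x F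
  proof -
    have "restrict_l2 x \<in> Cred0 \<sigma>"
      by (rule restrict_l2_in_Cred0[OF that(1)])
    then have "restrict_l2 x \<in> Cred0.mball x0 r"
      using \<open>x0 \<in> Cred0 \<sigma>\<close> that(2)
      by (simp add: op_dist_def Cred0_bounded_op opnorm_diff_restrict_l2)
    then have "opnorm (mult_partial_sum \<sigma> \<phi> F (restrict_l2 x)) \<le> k"
      using ball \<open>finite F\<close> by blast
    then show ?thesis
      by (simp add: mult_partial_sum_restrict_l2)
  qed
  moreover have "x0 \<in> Cred \<sigma>"
    using \<open>x0 \<in> Cred0 \<sigma>\<close> by (simp add: Cred0_def)
  ultimately show ?thesis
    using \<open>r > 0\<close> by blast
qed

lemma mult_partial_sums_bounded_near_0:
  assumes \<sigma>: "cocycle2 \<sigma>" and x0: "x0 \<in> Cred \<sigma>"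
    and ball: "\<And>x F. x \<in> Cred \<sigma> \<Longrightarrow> opnorm (op_diff x0 x) < r \<Longrightarrow> finite F \<Longrightarrow>
      opnorm (mult_partial_sum \<sigma> \<phi> F x) \<le> k"
    and z: "z \<in> Cred \<sigma>" "opnorm z < r" and F: "finite F"
  shows "opnorm (mult_partial_sum \<sigma> \<phi> F z) \<le> 2 * k"
proof -
  define w where "w = oplin 1 x0 1 z"
  have "w \<in> Cred \<sigma>"
    unfolding w_def by (rule Cred_oplin[OF \<sigma> x0 z(1)])
  have "op_diff x0 w = oplin (-1) z 0 z"
    by (simp add: w_def op_diff_def oplin_def)
  then have "opnorm (op_diff x0 w) < r"
    using opnorm_oplin_le[OF Cred_bounded_op[OF z(1)] Cred_bounded_op[OF z(1)], of "-1" 0] z(2) by simp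
  have "mult_partial_sum \<sigma> \<phi> F w = oplin 1 (mult_partial_sum \<sigma> \<phi> F x0) 1 (mult_partial_sum \<sigma> \<phi> F z)"
    by (simp add: w_def mult_partial_sum_oplin)
  then have "mult_partial_sum \<sigma> \<phi> F z
      = oplin 1 (mult_partial_sum \<sigma> \<phi> F w) (-1) (mult_partial_sum \<sigma> \<phi> F x0)"
    by (simp add: oplin_def)
  then have "opnorm (mult_partial_sum \<sigma> \<phi> F z)
      \<le> opnorm (mult_partial_sum \<sigma> \<phi> F w) + opnorm (mult_partial_sum \<sigma> \<phi> F x0)"
    using opnorm_oplin_le[OF bounded_op_mult_partial_sum[OF \<sigma> F] bounded_op_mult_partial_sum[OF \<sigma> F],
        where a=1 and b="-1"] by simp
  also have "\<dots> \<le> k + k"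
    using ball[OF \<open>w \<in> Cred \<sigma>\<close> \<open>opnorm (op_diff x0 w) < r\<close> F] ball[OF x0 _ F] z(2)
      opnorm_nonneg[OF Cred_bounded_op[OF z(1)]]
    by (intro add_mono) (auto simp: opnorm_diff_self)
  finally show ?thesis
    by simp
qed

lemma mult_partial_sums_bounded_near_0_imp_Lipschitz:
  assumes \<sigma>: "cocycle2 \<sigma>" and "r > 0"
    and ball: "\<And>x F. x \<in> Cred \<sigma> \<Longrightarrow> opnorm x < r \<Longrightarrow> finite F \<Longrightarrow> opnorm (mult_partial_sum \<sigma> \<phi> F x) \<le> k"
    and z: "z \<in> Cred \<sigma>" and F: "finite F"
  shows "opnorm (mult_partial_sum \<sigma> \<phi> F z) \<le> 2 * k / r * opnorm z"
proof (cases "opnorm z = 0")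
  case True
  then show ?thesis
    using opnorm_mult_partial_sum_le[OF \<sigma> F Cred_bounded_op[OF z], of \<phi>] by simp
next
  case False
  then have "opnorm z > 0"
    using opnorm_nonneg[OF Cred_bounded_op[OF z]] by simp
  define t where "t = r / (2 * opnorm z)"
  have "t > 0"
    using \<open>r > 0\<close> \<open>opnorm z > 0\<close> by (simp add: t_def)
  define w where "w = oplin (complex_of_real t) z 0 z"
  have "w \<in> Cred \<sigma>"
    unfolding w_def by (rule Cred_oplin[OF \<sigma> z z])
  have "opnorm w \<le> t * opnorm z"
    using opnorm_oplin_le[OF Cred_bounded_op[OF z] Cred_bounded_op[OF z], of "complex_of_real t" 0] \<open>t > 0\<close>
    by (simp add: w_def)
  also have "\<dots> < r"
    using \<open>r > 0\<close> \<open>opnorm z > 0\<close> by (simp add: t_def)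
  finally have Sw: "opnorm (mult_partial_sum \<sigma> \<phi> F w) \<le> k"
    by (rule ball[OF \<open>w \<in> Cred \<sigma>\<close> _ F])
  have "mult_partial_sum \<sigma> \<phi> F w
      = oplin (complex_of_real t) (mult_partial_sum \<sigma> \<phi> F z) 0 (mult_partial_sum \<sigma> \<phi> F z)"
    by (simp add: w_def mult_partial_sum_oplin)
  then have "mult_partial_sum \<sigma> \<phi> F z
      = oplin (1 / complex_of_real t) (mult_partial_sum \<sigma> \<phi> F w) 0 (mult_partial_sum \<sigma> \<phi> F w)"
    using \<open>t > 0\<close> by (simp add: oplin_def)
  then have "opnorm (mult_partial_sum \<sigma> \<phi> F z) \<le> 1 / t * opnorm (mult_partial_sum \<sigma> \<phi> F w)"
    using opnorm_oplin_le[OF bounded_op_mult_partial_sum[OF \<sigma> F] bounded_op_mult_partial_sum[OF \<sigma> F],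
        where a="1 / complex_of_real t" and b=0] \<open>t > 0\<close>
    by (simp add: norm_divide)
  also have "\<dots> \<le> 1 / t * k"
    using Sw \<open>t > 0\<close> by (intro mult_left_mono) auto
  also have "\<dots> = 2 * k / r * opnorm z"
    using \<open>r > 0\<close> by (simp add: t_def field_simps)
  finally show ?thesis .
qed

lemma MCF_partial_sums_uniformly_bounded:
  assumes \<sigma>: "cocycle2 \<sigma>" and "\<phi> \<in> MCF \<sigma>"
  shows "\<exists>K\<ge>0. \<forall>F z. finite F \<longrightarrow> z \<in> Cred \<sigma> \<longrightarrow> opnorm (mult_partial_sum \<sigma> \<phi> F z) \<le> K * opnorm z"
proof -
  obtain x0 r k where x0: "x0 \<in> Cred \<sigma>" and "r > 0"
    and ball: "\<And>x F. x \<in> Cred \<sigma> \<Longrightarrow> opnorm (op_diff x0 x) < r \<Longrightarrow> finite F \<Longrightarrow>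
      opnorm (mult_partial_sum \<sigma> \<phi> F x) \<le> k"
    using MCF_partial_sums_bounded_on_ball[OF assms] by blast
  have "0 \<le> opnorm (mult_partial_sum \<sigma> \<phi> {} x0)"
    by (intro opnorm_nonneg bounded_op_mult_partial_sum \<sigma>) simp
  also have "\<dots> \<le> k"
    using ball[OF x0] \<open>r > 0\<close> by (simp add: opnorm_diff_self)
  finally have "0 \<le> 2 * (2 * k) / r"
    using \<open>r > 0\<close> by simp
  moreover have "opnorm (mult_partial_sum \<sigma> \<phi> F z) \<le> 2 * (2 * k) / r * opnorm z"
    if "finite F" "z \<in> Cred \<sigma>" for F z
    using mult_partial_sums_bounded_near_0[OF \<sigma> x0 ball]
    by (intro mult_partial_sums_bounded_near_0_imp_Lipschitz[OF \<sigma> \<open>r > 0\<close> _ that(2,1)]) auto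
  ultimately show ?thesis
    by blast
qed

section \<open>Convergence of the multiplied Fourier series\<close>

lemma MCF_imp_MA:
  assumes \<sigma>: "cocycle2 \<sigma>" and "\<phi> \<in> MCF \<sigma>"
  shows "\<phi> \<in> MA \<sigma>"
proof -
  obtain K where K: "\<And>F z. finite F \<Longrightarrow> z \<in> Cred \<sigma> \<Longrightarrow> opnorm (mult_partial_sum \<sigma> \<phi> F z) \<le> K * opnorm z"
    using MCF_partial_sums_uniformly_bounded[OF assms] by blast
  have "opnorm (lincomb \<sigma> (\<lambda>g. \<phi> g * c g) F) \<le> K * opnorm (lincomb \<sigma> c F)" if "finite F" for c F
    using K[OF that lincomb_in_Cred[OF \<sigma> that]] mult_partial_sum_lincomb[OF \<sigma> that order_refl] by simp
  then show ?thesis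
    unfolding MA_def by blast
qed

lemma opnorm_diff_mult_lincomb_le:
  assumes \<sigma>: "cocycle2 \<sigma>" and x: "x \<in> Cred \<sigma>" and T: "bounded_op T"
    and K: "\<And>F z. finite F \<Longrightarrow> z \<in> Cred \<sigma> \<Longrightarrow> opnorm (mult_partial_sum \<sigma> \<phi> F z) \<le> K * opnorm z"
    and E: "finite E" "F \<subseteq> E"
  shows "opnorm (op_diff T (lincomb \<sigma> (\<lambda>g. \<phi> g * c g) F))
    \<le> opnorm (op_diff (mult_partial_sum \<sigma> \<phi> E x) T) + K * opnorm (op_diff x (lincomb \<sigma> c F))"
proof -
  have "finite F"
    using E by (rule finite_subset[rotated])
  have "op_diff T (lincomb \<sigma> (\<lambda>g. \<phi> g * c g) F)
      = oplin 1 (op_diff T (mult_partial_sum \<sigma> \<phi> E x)) 1 (mult_partial_sum \<sigma> \<phi> E (op_diff x (lincomb \<sigma> c F)))"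
    unfolding mult_partial_sum_lincomb[OF \<sigma> E, symmetric] op_diff_eq_oplin mult_partial_sum_oplin
    by (simp add: oplin_def fun_eq_iff)
  then have "opnorm (op_diff T (lincomb \<sigma> (\<lambda>g. \<phi> g * c g) F))
      \<le> opnorm (op_diff T (mult_partial_sum \<sigma> \<phi> E x)) + opnorm (mult_partial_sum \<sigma> \<phi> E (op_diff x (lincomb \<sigma> c F)))"
    using opnorm_oplin_le[OF bounded_op_diff[OF T bounded_op_mult_partial_sum[OF \<sigma> E(1)]]
        bounded_op_mult_partial_sum[OF \<sigma> E(1)], where a=1 and b=1]
    by simp
  also have "\<dots> \<le> opnorm (op_diff (mult_partial_sum \<sigma> \<phi> E x) T) + K * opnorm (op_diff x (lincomb \<sigma> c F))"
    using K[OF E(1)] Cred_oplin[OF \<sigma> x lincomb_in_Cred[OF \<sigma> \<open>finite F\<close>]] opnorm_diff_commute[of T]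
    by (simp add: op_diff_eq_oplin)
  finally show ?thesis .
qed

lemma op_sums_is_Mext:
  assumes \<sigma>: "cocycle2 \<sigma>" and x: "x \<in> Cred \<sigma>" and "K \<ge> 0"
    and K: "\<And>F z. finite F \<Longrightarrow> z \<in> Cred \<sigma> \<Longrightarrow> opnorm (mult_partial_sum \<sigma> \<phi> F z) \<le> K * opnorm z"
    and sums: "op_sums \<sigma> (\<lambda>g. \<phi> g * fhat x g) T"
  shows "is_Mext \<sigma> \<phi> x T"
  unfolding is_Mext_def
proof (intro conjI allI impI)
  have T: "bounded_op T"
    and lim: "((\<lambda>F. opnorm (op_diff (mult_partial_sum \<sigma> \<phi> F x) T)) \<longlongrightarrow> 0) (finite_subsets_at_top UNIV)"
    using sums unfolding op_sums_def mult_partial_sum_def by auto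
  show "bounded_op T"
    by (rule T)
  fix \<epsilon> :: real
  assume "\<epsilon> > 0"
  define \<delta> where "\<delta> = \<epsilon> / (2 * (K + 1))"
  have "\<forall>\<^sub>F F in finite_subsets_at_top UNIV. opnorm (op_diff (mult_partial_sum \<sigma> \<phi> F x) T) < \<epsilon> / 2"
    by (rule order_tendstoD(2)[OF lim]) (use \<open>\<epsilon> > 0\<close> in simp)
  then obtain F0 where "finite F0"
    and F0: "\<And>E. finite E \<Longrightarrow> F0 \<subseteq> E \<Longrightarrow> opnorm (op_diff (mult_partial_sum \<sigma> \<phi> E x) T) < \<epsilon> / 2"
    unfolding eventually_finite_subsets_at_top by auto
  have "opnorm (op_diff T (lincomb \<sigma> (\<lambda>g. \<phi> g * c g) F)) < \<epsilon>"
    if "finite F" and close: "opnorm (op_diff x (lincomb \<sigma> c F)) < \<delta>" for c F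
  proof -
    have E: "finite (F \<union> F0)" "F \<subseteq> F \<union> F0"
      using \<open>finite F\<close> \<open>finite F0\<close> by auto
    have "K * opnorm (op_diff x (lincomb \<sigma> c F)) \<le> K * \<delta>"
      using close \<open>K \<ge> 0\<close> by (intro mult_left_mono) auto
    also have "\<dots> \<le> \<epsilon> / 2"
      using \<open>K \<ge> 0\<close> \<open>\<epsilon> > 0\<close> by (simp add: \<delta>_def field_simps)
    finally show ?thesis
      using opnorm_diff_mult_lincomb_le[OF \<sigma> x T K E, of c] F0[OF E(1)] by simp
  qed
  moreover have "\<delta> > 0"
    using \<open>\<epsilon> > 0\<close> \<open>K \<ge> 0\<close> by (simp add: \<delta>_def)
  ultimately show "\<exists>\<delta>>0. \<forall>c F. finite F \<and> opnorm (op_diff x (lincomb \<sigma> c F)) < \<delta> \<longrightarrow>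
      opnorm (op_diff T (lincomb \<sigma> (\<lambda>g. \<phi> g * c g) F)) < \<epsilon>"
    by blast
qed

lemma MCF_op_sums_Mext:
  assumes \<sigma>: "cocycle2 \<sigma>" and "\<phi> \<in> MCF \<sigma>" and x: "x \<in> Cred \<sigma>"
  shows "op_sums \<sigma> (\<lambda>g. \<phi> g * fhat x g) (Mext \<sigma> \<phi> x)"
proof -
  obtain K where "K \<ge> 0"
    and K: "\<And>F z. finite F \<Longrightarrow> z \<in> Cred \<sigma> \<Longrightarrow> opnorm (mult_partial_sum \<sigma> \<phi> F z) \<le> K * opnorm z"
    using MCF_partial_sums_uniformly_bounded[OF \<sigma> \<open>\<phi> \<in> MCF \<sigma>\<close>] by blast
  obtain T where T: "op_sums \<sigma> (\<lambda>g. \<phi> g * fhat x g) T"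
    using \<open>\<phi> \<in> MCF \<sigma>\<close> x unfolding MCF_def by blast
  have Mext: "is_Mext \<sigma> \<phi> x (Mext \<sigma> \<phi> x)"
    by (rule is_Mext_Mext[OF \<sigma> MCF_imp_MA[OF \<sigma> \<open>\<phi> \<in> MCF \<sigma>\<close>] x])
  have "T \<xi> = Mext \<sigma> \<phi> x \<xi>" if "\<xi> \<in> l2" for \<xi>
    by (rule is_Mext_unique[OF \<sigma> x op_sums_is_Mext[OF \<sigma> x \<open>K \<ge> 0\<close> K T] Mext that])
  then have "opnorm (op_diff (lincomb \<sigma> (\<lambda>g. \<phi> g * fhat x g) F) (Mext \<sigma> \<phi> x))
      = opnorm (op_diff (lincomb \<sigma> (\<lambda>g. \<phi> g * fhat x g) F) T)" for F
    by (intro opnorm_cong) (simp add: op_diff_def)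
  moreover have "bounded_op (Mext \<sigma> \<phi> x)"
    using Mext unfolding is_Mext_def by blast
  ultimately show ?thesis
    using T unfolding op_sums_def by simp
qed

theorem proposition4p7:
  fixes \<sigma> :: "'g::mgroup \<Rightarrow> 'g \<Rightarrow> complex"
  assumes "cocycle2 \<sigma>"
  shows "MCF \<sigma> \<subseteq> MA \<sigma>
    \<and> MCF \<sigma> = {\<phi> \<in> MA \<sigma>. \<forall>x\<in>Cred \<sigma>. Mext \<sigma> \<phi> x \<in> CF \<sigma>}
    \<and> (\<forall>\<phi>\<in>MCF \<sigma>. \<forall>x\<in>Cred \<sigma>. op_sums \<sigma> (\<lambda>g. \<phi> g * fhat x g) (Mext \<sigma> \<phi> x))"
proof -
  have Mext: "Mext \<sigma> \<phi> x \<in> Cred \<sigma>" "fhat (Mext \<sigma> \<phi> x) = (\<lambda>g. \<phi> g * fhat x g)"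
    if "\<phi> \<in> MA \<sigma>" "x \<in> Cred \<sigma>" for \<phi> x
    using is_Mext_Mext[OF assms that] is_Mext_in_Cred[OF that(2)] fhat_is_Mext[OF assms that(2)] by auto
  have "MCF \<sigma> \<subseteq> MA \<sigma>"
    using MCF_imp_MA[OF assms] by blast
  moreover have "\<phi> \<in> MCF \<sigma> \<longleftrightarrow> (\<forall>x\<in>Cred \<sigma>. Mext \<sigma> \<phi> x \<in> CF \<sigma>)" if "\<phi> \<in> MA \<sigma>" for \<phi>
    using Mext[OF that] unfolding MCF_def CF_def by auto
  moreover have "op_sums \<sigma> (\<lambda>g. \<phi> g * fhat x g) (Mext \<sigma> \<phi> x)" if "\<phi> \<in> MCF \<sigma>" "x \<in> Cred \<sigma>" for \<phi> x
    by (rule MCF_op_sums_Mext[OF assms that])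
  ultimately show ?thesis
    by blast
qed

end
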